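(* Let $F=L-N:X\to Y$ satisfy hypothesis (H), and suppose that for every $u\in X$ the limit $\lim_{t\to+\infty}PN(tu)/t=N_\infty(u)$ exists in $Y$. Then there exist $w_+,w_-\in H_X$ such that for every $z\in H_Y$, $$\lim_{t\to+\infty}\Big\|\frac{w(z,t)}{t}-w_+\Big\|_X=0,\qquad \lim_{t\to-\infty}\Big\|\frac{w(z,t)}{t}-w_-\Big\|_X=0,$$ and $w_+$, $w_-$ are respectively the unique solutions $w\in H_X$ of the equations $Lw-PN_\infty(w+\phi_p)=0$ and $Lw+PN_\infty(-w-\phi_p)=0$.
   Context: Let $X,Y$ be real Hilbert spaces, $X$ densely included in $Y$, and let $L:X\subset Y\to Y$ be a self-adjoint operator, $X$ carrying the graph norm. Let $\lambda_p$ be a simple isolated eigenvalue of $L$ with eigenvector $\phi_p\in X$, $\|\phi_p\|_Y=1$. Let $V_X=V_Y=\langle\phi_p\rangle$ be its real span, $H_Y=\{y\in Y:\langle y,\phi_p\rangle_Y=0\}$, $H_X=X\cap H_Y$, and $P:Y\to H_Y$ the orthogonal projection. Let $N:Y\to Y$, $F=L-N:X\to Y$, and for $t\in\mathbb{R}$ let $PN_t:H_Y\to H_Y$, $PN_t(w)=PN(w+t\phi_p)$, and $PF_t:H_X\to H_Y$, $PF_t(w)=PF(w+t\phi_p)$. Hypothesis (H): there is $n\ge0$ such that every $PN_t$ is Lipschitz with constant $n$ independent of $t$, and $[-n,n]\cap\sigma(L)=\{\lambda_p\}$. Under (H) each $PF_t$ is a homeomorphism; for $z\in H_Y$, $t\in\mathbb{R}$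 let $w(z,t)=(PF_t)^{-1}(z)$, so the fiber associated to $z$ is $\{w(z,t)+t\phi_p:t\in\mathbb{R}\}=F^{-1}(z+V_Y)$. *)

theory Defs
  imports "HOL-Analysis.Analysis"
begin

text \<open>The Hilbert space Y is a type of class real_inner and complete_space.
  The operator L is a function on Y considered only on its domain D (the space X).\<close>

definition linear_on :: "'a::real_vector set \<Rightarrow> ('a \<Rightarrow> 'a) \<Rightarrow> bool" where
  "linear_on D L \<longleftrightarrow> (\<forall>u\<in>D. \<forall>v\<in>D. \<forall>c::real.
      L (u + v) = L u + L v \<and> L (c *\<^sub>R u) = c *\<^sub>R L u)"

text \<open>Densely defined self-adjoint operator (L = L*): the domain of the adjoint is
  the set of v for which u \<mapsto> <Lu,v> is represented on D by some f, and equals D;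
  on D the adjoint agrees with L.\<close>
definition self_adjoint_op :: "'a::{real_inner,complete_space} set \<Rightarrow> ('a \<Rightarrow> 'a) \<Rightarrow> bool" where
  "self_adjoint_op D L \<longleftrightarrow>
     subspace D \<and> closure D = UNIV \<and> linear_on D L \<and>
     (\<forall>v. v \<in> D \<longleftrightarrow> (\<exists>f. \<forall>u\<in>D. inner (L u) v = inner u f)) \<and>
     (\<forall>u\<in>D. \<forall>v\<in>D. inner (L u) v = inner u (L v))"

definition graph_norm :: "('a::real_normed_vector \<Rightarrow> 'a) \<Rightarrow> 'a \<Rightarrow> real" where
  "graph_norm L u = sqrt ((norm u)\<^sup>2 + (norm (L u))\<^sup>2)"

definition op_spectrum :: "'a::real_normed_vector set \<Rightarrow> ('a \<Rightarrow> 'a) \<Rightarrow> real set" where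
  "op_spectrum D L = {mu. \<not> (bij_betw (\<lambda>u. L u - mu *\<^sub>R u) D UNIV \<and>
       (\<exists>C. \<forall>u\<in>D. norm u \<le> C * norm (L u - mu *\<^sub>R u)))}"

definition simple_isolated_eigen ::
  "'a::real_inner set \<Rightarrow> ('a \<Rightarrow> 'a) \<Rightarrow> real \<Rightarrow> 'a \<Rightarrow> bool" where
  "simple_isolated_eigen D L lam phi \<longleftrightarrow>
     phi \<in> D \<and> norm phi = 1 \<and> L phi = lam *\<^sub>R phi \<and>
     (\<forall>u\<in>D. L u = lam *\<^sub>R u \<longrightarrow> (\<exists>c. u = c *\<^sub>R phi)) \<and>
     (\<exists>e>0. op_spectrum D L \<inter> {lam - e <..< lam + e} = {lam})"

definition projH :: "'a::real_inner \<Rightarrow> 'a \<Rightarrow> 'a" where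
  "projH phi y = y - inner y phi *\<^sub>R phi"

definition HY :: "'a::real_inner \<Rightarrow> 'a set" where
  "HY phi = {y. inner y phi = 0}"

definition HX :: "'a::real_inner set \<Rightarrow> 'a \<Rightarrow> 'a set" where
  "HX D phi = D \<inter> HY phi"

definition hyp_H :: "'a::{real_inner,complete_space} set \<Rightarrow> ('a \<Rightarrow> 'a) \<Rightarrow> ('a \<Rightarrow> 'a)
    \<Rightarrow> real \<Rightarrow> 'a \<Rightarrow> bool" where
  "hyp_H D L N lam phi \<longleftrightarrow> (\<exists>n::real. n \<ge> 0 \<and>
     (\<forall>t::real. \<forall>w1\<in>HY phi. \<forall>w2\<in>HY phi.
        norm (projH phi (N (w1 + t *\<^sub>R phi)) - projH phi (N (w2 + t *\<^sub>R phi))) \<le> n * norm (w1 - w2)) \<and>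
     {-n..n} \<inter> op_spectrum D L = {lam})"

definition fiber_w :: "'a::real_inner set \<Rightarrow> ('a \<Rightarrow> 'a) \<Rightarrow> ('a \<Rightarrow> 'a) \<Rightarrow> 'a \<Rightarrow> 'a \<Rightarrow> real \<Rightarrow> 'a" where
  "fiber_w D L N phi z t = (THE w. w \<in> HX D phi \<and>
      projH phi (L (w + t *\<^sub>R phi) - N (w + t *\<^sub>R phi)) = z)"

end

theory Submission
  imports Defs
begin

text \<open>The restriction of \<open>L\<close> to \<open>HX\<close> is invertible onto \<open>HY\<close>, and the hypothesis on the
  spectrum gives \<open>c * norm u \<le> norm (L u)\<close> on \<open>HX\<close> for some \<open>c > n\<close>: the inverse is a bounded
  symmetric operator, its norm is attained as an approximate eigenvalue, and the reciprocal of that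
  approximate eigenvalue lies in the spectrum of \<open>L\<close> but is not \<open>lam\<close> (on \<open>HY\<close> the resolvent
  has no pole at the isolated eigenvalue \<open>lam\<close>). Hence the contraction principle solves
  \<open>L w - P N(w + t phi) = z\<close> uniquely, and likewise the profile equation
  \<open>L w - P N\<^sub>\<infinity>(w + phi) = 0\<close>, whose nonlinearity inherits the Lipschitz constant \<open>n\<close>.
  Dividing the fiber equation by \<open>t\<close> shows that \<open>w(z,t)/t\<close> solves the profile equation up to an
  error tending to \<open>0\<close>, which forces convergence to its solution in the graph norm. The limit
  \<open>t \<rightarrow> -\<infinity>\<close> is the limit \<open>t \<rightarrow> \<infinity>\<close> for the reflected nonlinearity \<open>x \<mapsto> - N (- x)\<close>.\<close>

section \<open>Approximate eigenvalues of bounded symmetric operators\<close>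

definition approx_eigenvalue :: "'a::real_normed_vector set \<Rightarrow> ('a \<Rightarrow> 'a) \<Rightarrow> real \<Rightarrow> bool" where
  "approx_eigenvalue S B \<mu> \<longleftrightarrow> (\<forall>\<epsilon>>0. \<exists>x\<in>S. norm x = 1 \<and> norm (B x - \<mu> *\<^sub>R x) < \<epsilon>)"

lemma approx_eigenvalue_disj:
  assumes "\<And>\<epsilon>. \<epsilon> > 0 \<Longrightarrow> (\<exists>x\<in>S. norm x = 1 \<and> norm (B x - a *\<^sub>R x) < \<epsilon>) \<or>
                             (\<exists>x\<in>S. norm x = 1 \<and> norm (B x - b *\<^sub>R x) < \<epsilon>)"
  shows "approx_eigenvalue S B a \<or> approx_eigenvalue S B b"
proof (rule ccontr)
  assume "\<not> ?thesis"
  then obtain e1 e2 where "e1 > 0" "e2 > 0"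
    and "\<forall>x\<in>S. norm x = 1 \<longrightarrow> norm (B x - a *\<^sub>R x) \<ge> e1"
    and "\<forall>x\<in>S. norm x = 1 \<longrightarrow> norm (B x - b *\<^sub>R x) \<ge> e2"
    unfolding approx_eigenvalue_def by (auto simp: not_less)
  then show False using assms[of "min e1 e2"] by fastforce
qed

lemma normalized_approx_eigenvector:
  assumes "\<And>c. B (c *\<^sub>R x) = c *\<^sub>R B x" and "\<And>c. c *\<^sub>R x \<in> S"
    and "x \<noteq> 0" and "norm (B x - \<mu> *\<^sub>R x) < \<delta> * norm x"
  shows "\<exists>u\<in>S. norm u = 1 \<and> norm (B u - \<mu> *\<^sub>R u) < \<delta>"
proof -
  let ?u = "(1 / norm x) *\<^sub>R x"
  have "B ?u - \<mu> *\<^sub>R ?u = (1 / norm x) *\<^sub>R (B x - \<mu> *\<^sub>R x)"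
    using assms(1) by (simp add: algebra_simps)
  then have "norm (B ?u - \<mu> *\<^sub>R ?u) = norm (B x - \<mu> *\<^sub>R x) / norm x" by simp
  also have "\<dots> < \<delta>" using assms(3,4) by (simp add: divide_simps)
  finally have "norm (B ?u - \<mu> *\<^sub>R ?u) < \<delta>" .
  moreover have "?u \<in> S" "norm ?u = 1" using assms(2,3) by auto
  ultimately show ?thesis by blast
qed

lemma norm_diff_scaleR_power2:
  fixes a b :: "'a::real_inner"
  shows "norm (a - c *\<^sub>R b) ^ 2 = norm a ^ 2 - 2 * c * inner a b + c^2 * norm b ^ 2"
  unfolding power2_norm_eq_inner
  by (simp add: inner_diff_left inner_diff_right inner_commute power2_eq_square algebra_simps)

definition symmetric_on :: "'a::real_inner set \<Rightarrow> ('a \<Rightarrow> 'a) \<Rightarrow> bool" where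
  "symmetric_on S B \<longleftrightarrow> (\<forall>x\<in>S. \<forall>y\<in>S. inner (B x) y = inner x (B y))"

lemma symmetric_square_defect:
  fixes B :: "'a::real_inner \<Rightarrow> 'a"
  assumes "symmetric_on S B" and "B ` S \<subseteq> S" and bound: "\<forall>y\<in>S. norm (B y) \<le> M * norm y"
    and x: "x \<in> S" "norm x = 1"
  shows "norm (B (B x) - M\<^sup>2 *\<^sub>R x) ^ 2 \<le> M\<^sup>2 * (M\<^sup>2 - norm (B x) ^ 2)"
proof -
  have Bx: "B x \<in> S" using assms(2) x(1) by blast
  have "norm (B (B x)) \<le> M * norm (B x)" using bound Bx by blast
  then have BBx: "norm (B (B x)) ^ 2 \<le> M\<^sup>2 * norm (B x) ^ 2"
    by (metis norm_ge_zero power_mono power_mult_distrib)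
  have "inner (B (B x)) x = norm (B x) ^ 2"
    using assms(1) Bx x(1) unfolding symmetric_on_def by (simp add: power2_norm_eq_inner)
  then have "norm (B (B x) - M\<^sup>2 *\<^sub>R x) ^ 2 = norm (B (B x)) ^ 2 - 2 * M\<^sup>2 * norm (B x) ^ 2 + M\<^sup>2 * M\<^sup>2"
    using norm_diff_scaleR_power2[of "B (B x)" "M\<^sup>2" x] x(2) by (simp add: power2_eq_square)
  then show ?thesis using BBx by (simp add: algebra_simps)
qed

lemma linear_onD:
  assumes "linear_on S B" "x \<in> S" "y \<in> S"
  shows "B (x + y) = B x + B y" and "B (c *\<^sub>R x) = c *\<^sub>R B x"
  using assms unfolding linear_on_def by blast+

text \<open>If \<open>norm (B x)\<close> is close to \<open>M\<close> then \<open>x\<close> is almost an eigenvector of \<open>B\<^sup>2\<close> for \<open>M\<^sup>2\<close>;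
  hence either \<open>(B + M) x\<close> is small, or it is almost an eigenvector of \<open>B\<close> for \<open>M\<close>.\<close>

lemma symmetric_approx_eigenvalue_norm:
  fixes B :: "'a::real_inner \<Rightarrow> 'a"
  assumes S: "subspace S" and B: "linear_on S B" "B ` S \<subseteq> S" "symmetric_on S B"
    and bound: "\<forall>y\<in>S. norm (B y) \<le> M * norm y" and "M > 0"
    and near: "\<And>\<delta>. \<delta> > 0 \<Longrightarrow> \<exists>x\<in>S. norm x = 1 \<and> M - \<delta> < norm (B x)"
  shows "approx_eigenvalue S B M \<or> approx_eigenvalue S B (- M)"
proof (rule approx_eigenvalue_disj)
  fix \<epsilon> :: real assume e: "\<epsilon> > 0"
  define \<delta> where "\<delta> = min M (\<epsilon>^4 / (2 * M^3 + 1))"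
  have pos: "2 * M^3 + 1 > 0" using \<open>M > 0\<close> by (simp add: add_pos_pos)
  then have "\<delta> > 0" unfolding \<delta>_def using \<open>M > 0\<close> e by simp
  then obtain x where x: "x \<in> S" "norm x = 1" "M - \<delta> < norm (B x)" using near by blast
  have "M - \<delta> \<ge> 0" unfolding \<delta>_def by simp
  then have "(M - \<delta>)\<^sup>2 < norm (B x) ^ 2" using x(3) by (simp add: power_strict_mono)
  then have gap: "M\<^sup>2 - norm (B x) ^ 2 < 2 * M * \<delta>"
    by (simp add: power2_eq_square algebra_simps) (smt (verit) zero_le_mult_iff \<open>0 < \<delta>\<close>)
  have "norm (B (B x) - M\<^sup>2 *\<^sub>R x) ^ 2 \<le> M\<^sup>2 * (M\<^sup>2 - norm (B x) ^ 2)"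
    using symmetric_square_defect[OF B(3,2) bound x(1,2)] .
  also have "\<dots> \<le> M\<^sup>2 * (2 * M * \<delta>)" using gap \<open>M > 0\<close> by (intro mult_left_mono) auto
  also have "\<dots> = 2 * M^3 * \<delta>" by (simp add: power2_eq_square power3_eq_cube)
  also have "\<dots> \<le> 2 * M^3 * (\<epsilon>^4 / (2 * M^3 + 1))"
    unfolding \<delta>_def using \<open>M > 0\<close> by (intro mult_left_mono) auto
  also have "\<dots> < (\<epsilon>\<^sup>2)\<^sup>2" using \<open>M > 0\<close> e pos by (simp add: divide_simps flip: power_mult)
  finally have small: "norm (B (B x) - M\<^sup>2 *\<^sub>R x) < \<epsilon>\<^sup>2"
    using power2_less_imp_less by fastforce
  define w where "w = B x + M *\<^sub>R x"
  have w: "w \<in> S" unfolding w_def using S B(2) x(1) by (auto intro: subspace_add subspace_scale)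
  have "B w - M *\<^sub>R w = B (B x) - M\<^sup>2 *\<^sub>R x"
    unfolding w_def using linear_onD[OF B(1)] B(2) x(1) S
    by (auto simp: algebra_simps power2_eq_square subspace_scale)
  show "(\<exists>x\<in>S. norm x = 1 \<and> norm (B x - M *\<^sub>R x) < \<epsilon>) \<or>
        (\<exists>x\<in>S. norm x = 1 \<and> norm (B x - (- M) *\<^sub>R x) < \<epsilon>)"
  proof (cases "norm w < \<epsilon>")
    case True
    then show ?thesis using x unfolding w_def by auto
  next
    case False
    have "norm (B w - M *\<^sub>R w) < \<epsilon> * norm w"
      using small False e \<open>B w - M *\<^sub>R w = _\<close> by (smt (verit) mult_left_mono power2_eq_square)
    then have "\<exists>u\<in>S. norm u = 1 \<and> norm (B u - M *\<^sub>R u) < \<epsilon>"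
      using False e w linear_onD[OF B(1) w w] S
      by (intro normalized_approx_eigenvector) (auto intro: subspace_scale)
    then show ?thesis by blast
  qed
qed

lemma bounded_symmetric_approx_eigenvalue:
  fixes B :: "'a::real_inner \<Rightarrow> 'a"
  assumes S: "subspace S" and B: "linear_on S B" "B ` S \<subseteq> S" "symmetric_on S B"
    and bounded: "\<forall>x\<in>S. norm (B x) \<le> K * norm x" and unit: "\<exists>x\<in>S. norm x = 1"
  shows "\<exists>M\<ge>0. (\<forall>x\<in>S. norm (B x) \<le> M * norm x) \<and> (\<exists>d. \<bar>d\<bar> = M \<and> approx_eigenvalue S B d)"
proof -
  define A where "A = {norm (B x) | x. x \<in> S \<and> norm x = 1}"
  define M where "M = Sup A"
  obtain x0 where x0: "x0 \<in> S" "norm x0 = 1" using unit by blast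
  have "A \<noteq> {}" using x0 unfolding A_def by blast
  have "bdd_above A" unfolding A_def bdd_above_def using bounded by fastforce
  have "norm (B x0) \<le> M"
    unfolding M_def using x0 \<open>bdd_above A\<close> by (intro cSup_upper) (auto simp: A_def)
  then have "M \<ge> 0" using norm_ge_zero order_trans by blast
  have bound: "norm (B x) \<le> M * norm x" if x: "x \<in> S" for x
  proof (cases "x = 0")
    case True then show ?thesis using linear_onD(2)[OF B(1) x x, of 0] by simp
  next
    case False
    let ?u = "(1 / norm x) *\<^sub>R x"
    have "norm (B ?u) \<le> M"
      unfolding M_def using x False S \<open>bdd_above A\<close>
      by (intro cSup_upper) (auto simp: A_def subspace_scale)
    moreover have "norm (B ?u) = norm (B x) / norm x" using linear_onD(2)[OF B(1) x x] by simp
    ultimately show ?thesis using False by (simp add: divide_simps)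
  qed
  have near: "\<exists>x\<in>S. norm x = 1 \<and> M - \<delta> < norm (B x)" if "\<delta> > 0" for \<delta>
  proof -
    have "M - \<delta> < Sup A" using that unfolding M_def by simp
    then show ?thesis
      using less_cSup_iff[OF \<open>A \<noteq> {}\<close> \<open>bdd_above A\<close>] unfolding A_def by blast
  qed
  have "\<exists>d. \<bar>d\<bar> = M \<and> approx_eigenvalue S B d"
  proof (cases "M = 0")
    case True
    then show ?thesis using x0 bound unfolding approx_eigenvalue_def by (intro exI[of _ 0]) force
  next
    case False
    then show ?thesis
      using symmetric_approx_eigenvalue_norm[OF S B, of M] bound near \<open>M \<ge> 0\<close>
      by (metis abs_minus_cancel abs_of_nonneg order_le_less)
  qed
  then show ?thesis using \<open>M \<ge> 0\<close> bound by blast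
qed

lemma approx_eigenvalue_inverse:
  fixes B L :: "'a::real_normed_vector \<Rightarrow> 'a"
  assumes inv: "\<And>y. y \<in> S \<Longrightarrow> B y \<in> T \<and> L (B y) = y"
    and T: "\<And>u c. u \<in> T \<Longrightarrow> c *\<^sub>R u \<in> T \<and> L (c *\<^sub>R u) = c *\<^sub>R L u"
    and ap: "approx_eigenvalue S B d" and "d \<noteq> 0"
  shows "approx_eigenvalue T L (1 / d)"
  unfolding approx_eigenvalue_def
proof (intro allI impI)
  fix \<delta> :: real assume "\<delta> > 0"
  have dpos: "\<bar>d\<bar> > 0" using \<open>d \<noteq> 0\<close> by simp
  define \<epsilon> where "\<epsilon> = min (\<bar>d\<bar> / 2) (\<delta> * \<bar>d\<bar>\<^sup>2 / 2)"
  have "\<epsilon> > 0" unfolding \<epsilon>_def using dpos \<open>\<delta> > 0\<close> by simp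
  then obtain x where x: "x \<in> S" "norm x = 1" "norm (B x - d *\<^sub>R x) < \<epsilon>"
    using ap unfolding approx_eigenvalue_def by blast
  define u where "u = B x"
  have u: "u \<in> T" "L u = x" using inv[OF x(1)] unfolding u_def by auto
  have "L u - (1 / d) *\<^sub>R u = - (1 / d) *\<^sub>R (B x - d *\<^sub>R x)"
    using u(2) \<open>d \<noteq> 0\<close> unfolding u_def by (simp add: algebra_simps)
  then have err: "norm (L u - (1 / d) *\<^sub>R u) < \<epsilon> / \<bar>d\<bar>" using x(3) dpos by (simp add: divide_simps)
  have "\<bar>d\<bar> \<le> norm (B x) + norm (B x - d *\<^sub>R x)"
    using norm_triangle_ineq4[of "B x" "B x - d *\<^sub>R x"] x(2) by simp
  then have "\<bar>d\<bar> / 2 \<le> norm u" using x(3) min.cobounded1[of "\<bar>d\<bar> / 2"] unfolding u_def \<epsilon>_def by linarith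
  then have "u \<noteq> 0" and "\<delta> * (\<bar>d\<bar> / 2) \<le> \<delta> * norm u"
    using dpos \<open>\<delta> > 0\<close> by (auto intro: mult_left_mono)
  moreover have "\<epsilon> / \<bar>d\<bar> \<le> \<delta> * (\<bar>d\<bar> / 2)"
  proof -
    have "\<epsilon> / \<bar>d\<bar> \<le> (\<delta> * \<bar>d\<bar>\<^sup>2 / 2) / \<bar>d\<bar>" unfolding \<epsilon>_def using dpos by (intro divide_right_mono) auto
    also have "\<dots> = \<delta> * (\<bar>d\<bar> / 2)" using dpos by (simp add: power2_eq_square divide_simps)
    finally show ?thesis .
  qed
  ultimately have "norm (L u - (1 / d) *\<^sub>R u) < \<delta> * norm u" using err by linarith
  then show "\<exists>x\<in>T. norm x = 1 \<and> norm (L x - (1 / d) *\<^sub>R x) < \<delta>"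
    using T u(1) \<open>u \<noteq> 0\<close> by (intro normalized_approx_eigenvector) auto
qed

lemma Cauchy_of_dist_le_null:
  fixes p :: "nat \<Rightarrow> 'a::metric_space"
  assumes "e \<longlonglongrightarrow> 0" and "\<And>m n. dist (p m) (p n) \<le> e m + e n"
  shows "Cauchy p"
proof (rule metric_CauchyI)
  fix \<epsilon> :: real assume "\<epsilon> > 0"
  then obtain N where "\<forall>k\<ge>N. e k < \<epsilon> / 2"
    using order_tendstoD(2)[OF assms(1), of "\<epsilon> / 2"] unfolding eventually_sequentially by auto
  have "dist (p m) (p n) < \<epsilon>" if "m \<ge> N" "n \<ge> N" for m n
  proof -
    have "e m < \<epsilon> / 2" "e n < \<epsilon> / 2" using \<open>\<forall>k\<ge>N. e k < \<epsilon> / 2\<close> that by blast+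
    then show ?thesis using assms(2)[of m n] by linarith
  qed
  then show "\<exists>N. \<forall>m\<ge>N. \<forall>n\<ge>N. dist (p m) (p n) < \<epsilon>" by blast
qed

lemma quadratic_root_bound:
  fixes d r s t \<rho> :: real
  assumes "d * (r - s) * (r - t) = r" "r \<noteq> 0" "\<rho> \<le> \<bar>r\<bar>" "0 < \<rho>"
    and "0 < s" "s \<le> \<rho> / 2" "0 < t" "t \<le> \<rho> / 2"
  shows "\<bar>d\<bar> \<le> 4 / \<rho>"
proof -
  have "\<bar>d\<bar> * (\<bar>r\<bar> / 2) * (\<bar>r\<bar> / 2) \<le> \<bar>d\<bar> * \<bar>r - s\<bar> * \<bar>r - t\<bar>"
  proof (intro mult_mono)
    show "\<bar>r\<bar> / 2 \<le> \<bar>r - s\<bar>" "\<bar>r\<bar> / 2 \<le> \<bar>r - t\<bar>" using assms(3-) by linarith+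
  qed auto
  also have "\<dots> = \<bar>d * (r - s) * (r - t)\<bar>" by (simp add: abs_mult)
  also have "\<dots> = \<bar>r\<bar>" using assms(1) by simp
  finally have "\<bar>r\<bar> * (\<bar>d\<bar> * \<bar>r\<bar>) \<le> \<bar>r\<bar> * 4" by (simp add: algebra_simps)
  then have "\<bar>d\<bar> * \<bar>r\<bar> \<le> 4" using assms(2) by simp
  then have "\<bar>d\<bar> \<le> 4 / \<bar>r\<bar>" using assms(2) by (simp add: field_simps)
  also have "\<dots> \<le> 4 / \<rho>" using assms(3,4) by (intro divide_left_mono) auto
  finally show ?thesis .
qed

lemma sum_squares_le_linear:
  fixes p q A \<kappa> :: real
  assumes "p\<^sup>2 + \<kappa> * q\<^sup>2 \<le> A * q" "\<kappa> > 0" "A \<ge> 0" "q \<ge> 0"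
  shows "q \<le> A / \<kappa>" and "\<bar>p\<bar> \<le> A / sqrt \<kappa>"
proof -
  have "\<kappa> * q * q \<le> A * q" using assms(1) zero_le_power2[of p] unfolding power2_eq_square by linarith
  then show q: "q \<le> A / \<kappa>"
    using assms(2-4) by (cases "q = 0") (auto simp: field_simps)
  have "p\<^sup>2 \<le> A * q" using assms(1,2) zero_le_power2[of q] mult_nonneg_nonneg[of \<kappa> "q\<^sup>2"] by linarith
  also have "\<dots> \<le> A * (A / \<kappa>)" using q assms(3) by (rule mult_left_mono)
  also have "\<dots> = (A / sqrt \<kappa>)\<^sup>2" using assms(2) by (simp add: power2_eq_square)
  finally show "\<bar>p\<bar> \<le> A / sqrt \<kappa>" using assms(2,3) by (simp add: power2_le_iff_abs_le)
qed

section \<open>Self-adjoint operators and their resolvents\<close>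

lemma approx_eigenvalue_in_spectrum:
  assumes "approx_eigenvalue S L \<mu>" "S \<subseteq> D"
  shows "\<mu> \<in> op_spectrum D L"
proof (rule ccontr)
  assume "\<mu> \<notin> op_spectrum D L"
  then obtain C where C: "\<forall>u\<in>D. norm u \<le> C * norm (L u - \<mu> *\<^sub>R u)"
    unfolding op_spectrum_def by blast
  obtain x where x: "x \<in> D" "norm x = 1" "norm (L x - \<mu> *\<^sub>R x) < 1 / (\<bar>C\<bar> + 1)"
  proof -
    have "(0::real) < 1 / (\<bar>C\<bar> + 1)" by simp
    then show ?thesis using assms that unfolding approx_eigenvalue_def by blast
  qed
  have "1 \<le> \<bar>C\<bar> * norm (L x - \<mu> *\<^sub>R x)"
    using C x(1,2) abs_ge_self[of C] by (smt (verit) mult_right_mono norm_ge_zero)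
  also have "\<dots> \<le> \<bar>C\<bar> * (1 / (\<bar>C\<bar> + 1))" using x(3) by (intro mult_left_mono) auto
  also have "\<dots> < 1" by (simp add: field_simps)
  finally show False by simp
qed

locale self_adjoint_operator =
  fixes D :: "'a::{real_inner,complete_space} set" and L :: "'a \<Rightarrow> 'a"
  assumes self_adjoint: "self_adjoint_op D L"
begin

lemma subspace_D: "subspace D" and dense_D: "closure D = UNIV" and linear_on_D: "linear_on D L"
  using self_adjoint unfolding self_adjoint_op_def by auto

lemma L_symmetric: "u \<in> D \<Longrightarrow> v \<in> D \<Longrightarrow> inner (L u) v = inner u (L v)"
  using self_adjoint unfolding self_adjoint_op_def by (elim conjE) blast

lemma adjoint_domain: "v \<in> D \<longleftrightarrow> (\<exists>f. \<forall>u\<in>D. inner (L u) v = inner u f)"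
  using self_adjoint unfolding self_adjoint_op_def by (elim conjE) (rule spec)

lemma D_add: "u \<in> D \<Longrightarrow> v \<in> D \<Longrightarrow> u + v \<in> D"
  and D_scale: "u \<in> D \<Longrightarrow> c *\<^sub>R u \<in> D"
  and D_minus: "u \<in> D \<Longrightarrow> - u \<in> D"
  using subspace_D by (simp_all add: subspace_add subspace_scale subspace_neg)

lemma L_add: "u \<in> D \<Longrightarrow> v \<in> D \<Longrightarrow> L (u + v) = L u + L v"
  and L_scale: "u \<in> D \<Longrightarrow> L (c *\<^sub>R u) = c *\<^sub>R L u"
  using linear_onD[OF linear_on_D] by blast+

lemma L_zero: "L 0 = 0"
  using L_scale[of 0 0] subspace_D by (simp add: subspace_0)

lemma L_minus: "u \<in> D \<Longrightarrow> L (- u) = - L u"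
  using L_scale[of u "-1"] by simp

lemma L_diff: "u \<in> D \<Longrightarrow> v \<in> D \<Longrightarrow> L (u - v) = L u - L v"
  using L_add[of u "- v"] L_minus D_minus by simp

lemma orthogonal_D_eq_0:
  assumes "\<And>u. u \<in> D \<Longrightarrow> inner u v = 0"
  shows "v = 0"
proof -
  have "closed {x. inner x v = 0}" by (intro closed_Collect_eq continuous_intros)
  moreover have "D \<subseteq> {x. inner x v = 0}" using assms by auto
  ultimately have "closure D \<subseteq> {x. inner x v = 0}" by (simp add: closure_minimal)
  then have "v \<in> {x. inner x v = 0}" using dense_D by (metis UNIV_I subsetD)
  then show ?thesis by simp
qed

lemma L_closed:
  assumes x: "\<And>k. x k \<in> D" and lim: "x \<longlonglongrightarrow> l" and Llim: "(\<lambda>k. L (x k)) \<longlonglongrightarrow> y"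
  shows "l \<in> D" and "L l = y"
proof -
  have eq: "inner (L u) l = inner u y" if u: "u \<in> D" for u
  proof -
    have "(\<lambda>k. inner (L u) (x k)) \<longlonglongrightarrow> inner (L u) l" by (intro tendsto_intros lim)
    moreover have "(\<lambda>k. inner (L u) (x k)) \<longlonglongrightarrow> inner u y"
      unfolding L_symmetric[OF u x] by (intro tendsto_intros Llim)
    ultimately show ?thesis using LIMSEQ_unique by blast
  qed
  then show l: "l \<in> D" using adjoint_domain[of l] by blast
  have "inner u (L l - y) = 0" if "u \<in> D" for u
    using eq[OF that] L_symmetric[OF that l] by (simp add: inner_diff_right)
  then have "L l - y = 0" by (rule orthogonal_D_eq_0)
  then show "L l = y" by simp
qed

definition resolvent :: "real \<Rightarrow> 'a \<Rightarrow> 'a" where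
  "resolvent \<mu> y = (THE x. x \<in> D \<and> L x - \<mu> *\<^sub>R x = y)"

context
  fixes \<mu> :: real
  assumes resolvent_set: "\<mu> \<notin> op_spectrum D L"
begin

lemma resolvent_set_bij: "bij_betw (\<lambda>u. L u - \<mu> *\<^sub>R u) D UNIV"
  and resolvent_set_bounded_below: "\<exists>C. \<forall>u\<in>D. norm u \<le> C * norm (L u - \<mu> *\<^sub>R u)"
  using resolvent_set unfolding op_spectrum_def by simp_all

lemma resolvent_ex1: "\<exists>!x. x \<in> D \<and> L x - \<mu> *\<^sub>R x = y"
proof -
  have "y \<in> (\<lambda>u. L u - \<mu> *\<^sub>R u) ` D" using resolvent_set_bij unfolding bij_betw_def by simp
  moreover have "inj_on (\<lambda>u. L u - \<mu> *\<^sub>R u) D" using resolvent_set_bij by (rule bij_betw_imp_inj_on)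
  ultimately show ?thesis unfolding inj_on_def by blast
qed

lemma resolvent_in_D: "resolvent \<mu> y \<in> D"
  and resolvent_eq: "L (resolvent \<mu> y) - \<mu> *\<^sub>R resolvent \<mu> y = y"
  using theI'[OF resolvent_ex1] unfolding resolvent_def by blast+

lemma resolvent_unique: "x \<in> D \<Longrightarrow> L x - \<mu> *\<^sub>R x = y \<Longrightarrow> resolvent \<mu> y = x"
  using resolvent_ex1 resolvent_in_D resolvent_eq by blast

lemma resolvent_lincomb: "resolvent \<mu> (a *\<^sub>R x + b *\<^sub>R y) = a *\<^sub>R resolvent \<mu> x + b *\<^sub>R resolvent \<mu> y"
proof (rule resolvent_unique)
  let ?u = "resolvent \<mu> x" and ?v = "resolvent \<mu> y"
  show "a *\<^sub>R ?u + b *\<^sub>R ?v \<in> D" by (intro D_add D_scale resolvent_in_D)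
  have "L (a *\<^sub>R ?u + b *\<^sub>R ?v) = a *\<^sub>R L ?u + b *\<^sub>R L ?v"
    using L_add[OF D_scale[OF resolvent_in_D] D_scale[OF resolvent_in_D]] L_scale[OF resolvent_in_D]
    by simp
  then show "L (a *\<^sub>R ?u + b *\<^sub>R ?v) - \<mu> *\<^sub>R (a *\<^sub>R ?u + b *\<^sub>R ?v) = a *\<^sub>R x + b *\<^sub>R y"
    using resolvent_eq[of x] resolvent_eq[of y] by (simp add: algebra_simps)
qed

lemma resolvent_add: "resolvent \<mu> (x + y) = resolvent \<mu> x + resolvent \<mu> y"
  and resolvent_scale: "resolvent \<mu> (a *\<^sub>R x) = a *\<^sub>R resolvent \<mu> x"
  using resolvent_lincomb[of 1 x 1 y] resolvent_lincomb[of a x 0 x] by simp_all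

lemma resolvent_bounded: "\<exists>C. \<forall>y. norm (resolvent \<mu> y) \<le> C * norm y"
proof -
  obtain C where "\<forall>u\<in>D. norm u \<le> C * norm (L u - \<mu> *\<^sub>R u)"
    using resolvent_set_bounded_below by blast
  then have "norm (resolvent \<mu> y) \<le> C * norm y" for y
    using resolvent_in_D[of y] resolvent_eq[of y] by metis
  then show ?thesis by blast
qed

lemma resolvent_symmetric: "inner (resolvent \<mu> x) y = inner x (resolvent \<mu> y)"
proof -
  let ?u = "resolvent \<mu> x" and ?v = "resolvent \<mu> y"
  have "inner ?u y = inner ?u (L ?v - \<mu> *\<^sub>R ?v)" using resolvent_eq[of y] by simp
  also have "\<dots> = inner (L ?u - \<mu> *\<^sub>R ?u) ?v"
    using L_symmetric[OF resolvent_in_D resolvent_in_D] by (simp add: inner_diff_right inner_diff_left)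
  finally show ?thesis using resolvent_eq[of x] by simp
qed

end

lemma resolvent_identity:
  assumes "a \<notin> op_spectrum D L" "b \<notin> op_spectrum D L"
  shows "resolvent a y - resolvent b y = (a - b) *\<^sub>R resolvent a (resolvent b y)"
proof -
  let ?w = "resolvent b y"
  have "y = (L ?w - a *\<^sub>R ?w) + (a - b) *\<^sub>R ?w" using resolvent_eq[OF assms(2)] by (simp add: algebra_simps)
  then have "resolvent a y = resolvent a (L ?w - a *\<^sub>R ?w) + resolvent a ((a - b) *\<^sub>R ?w)"
    using resolvent_add[OF assms(1)] by metis
  also have "\<dots> = ?w + (a - b) *\<^sub>R resolvent a ?w"
    using resolvent_unique[OF assms(1) resolvent_in_D[OF assms(2)]] resolvent_scale[OF assms(1)] by simp
  finally show ?thesis by simp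
qed

lemma resolvent_commute:
  assumes "a \<notin> op_spectrum D L" "b \<notin> op_spectrum D L"
  shows "resolvent a (resolvent b y) = resolvent b (resolvent a y)"
proof (cases "a = b")
  case False
  have "(a - b) *\<^sub>R resolvent a (resolvent b y) = (a - b) *\<^sub>R resolvent b (resolvent a y)"
    using resolvent_identity[OF assms, of y] resolvent_identity[OF assms(2,1), of y]
    by (metis minus_diff_eq scaleR_minus_left)
  then show ?thesis using False by simp
qed simp

text \<open>For \<open>s \<noteq> t\<close> the operator below is the difference quotient \<open>(s R(a+s) - t R(a+t)) / (s - t)\<close>
  of \<open>s \<mapsto> s R(a+s)\<close>. Its spectral function is \<open>r / ((r - s) (r - t))\<close> with \<open>r = x - a\<close>, and the
  lemmas below show that each approximate eigenvalue \<open>d \<noteq> 0\<close> of it comes from an approximate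
  eigenvalue \<open>a + r\<close> of \<open>L\<close> with \<open>d (r - s) (r - t) = r\<close>.\<close>

definition resolvent_quotient :: "real \<Rightarrow> real \<Rightarrow> real \<Rightarrow> 'a \<Rightarrow> 'a" where
  "resolvent_quotient a s t y = resolvent (a + t) y + s *\<^sub>R resolvent (a + t) (resolvent (a + s) y)"

context
  fixes a s t :: real
  assumes res_s: "a + s \<notin> op_spectrum D L" and res_t: "a + t \<notin> op_spectrum D L"
begin

lemma resolvent_quotient_eq:
  fixes x :: 'a
  defines "v \<equiv> resolvent (a + s) x" and "w \<equiv> resolvent (a + t) (resolvent (a + s) x)"
  shows "v \<in> D" "w \<in> D" "L v - (a + s) *\<^sub>R v = x" "L w - (a + t) *\<^sub>R w = v"
    "resolvent_quotient a s t x = v + t *\<^sub>R w"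
proof -
  show "v \<in> D" "L v - (a + s) *\<^sub>R v = x"
    unfolding v_def using resolvent_in_D[OF res_s] resolvent_eq[OF res_s] by auto
  show "w \<in> D" "L w - (a + t) *\<^sub>R w = v"
    unfolding w_def v_def using resolvent_in_D[OF res_t] resolvent_eq[OF res_t] by auto
  have "resolvent (a + t) x = v + (t - s) *\<^sub>R w"
    using resolvent_identity[OF res_t res_s, of x] unfolding v_def w_def by (simp add: algebra_simps)
  then show "resolvent_quotient a s t x = v + t *\<^sub>R w"
    unfolding resolvent_quotient_def w_def[symmetric] by (simp add: algebra_simps)
qed

lemma resolvent_quotient_diff:
  "s *\<^sub>R resolvent (a + s) y - t *\<^sub>R resolvent (a + t) y = (s - t) *\<^sub>R resolvent_quotient a s t y"
proof -
  define X where "X = resolvent (a + t) (resolvent (a + s) y)"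
  have Rs: "resolvent (a + s) y = resolvent (a + t) y + (s - t) *\<^sub>R X"
    using resolvent_identity[OF res_s res_t, of y] resolvent_commute[OF res_s res_t, of y]
    unfolding X_def by (simp add: algebra_simps)
  have "resolvent_quotient a s t y = resolvent (a + t) y + s *\<^sub>R X"
    unfolding resolvent_quotient_def X_def ..
  then show ?thesis unfolding Rs by (simp add: algebra_simps)
qed

lemma linear_on_resolvent_quotient: "linear_on UNIV (resolvent_quotient a s t)"
  unfolding linear_on_def resolvent_quotient_def
  by (simp add: resolvent_add[OF res_s] resolvent_add[OF res_t] resolvent_scale[OF res_s]
      resolvent_scale[OF res_t] algebra_simps)

lemma symmetric_on_resolvent_quotient: "symmetric_on UNIV (resolvent_quotient a s t)"
  unfolding symmetric_on_def resolvent_quotient_def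
  by (simp add: inner_add_left inner_add_right resolvent_symmetric[OF res_s] resolvent_symmetric[OF res_t]
      resolvent_commute[OF res_s res_t])

lemma bounded_resolvent_quotient: "\<exists>K. \<forall>x. norm (resolvent_quotient a s t x) \<le> K * norm x"
proof -
  obtain Cs Ct where Cs: "\<forall>y. norm (resolvent (a + s) y) \<le> Cs * norm y"
    and Ct: "\<forall>y. norm (resolvent (a + t) y) \<le> Ct * norm y"
    using resolvent_bounded[OF res_s] resolvent_bounded[OF res_t] by blast
  have "norm (resolvent_quotient a s t x) \<le> (Ct + \<bar>s\<bar> * \<bar>Ct\<bar> * \<bar>Cs\<bar>) * norm x" for x
  proof -
    have "norm (resolvent (a + t) (resolvent (a + s) x)) \<le> \<bar>Ct\<bar> * (\<bar>Cs\<bar> * norm x)"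
      using Ct Cs by (smt (verit) abs_ge_self mult_left_mono mult_right_mono norm_ge_zero)
    then show ?thesis
      unfolding resolvent_quotient_def using Ct norm_triangle_ineq[of "resolvent (a + t) x"]
      by (smt (verit) mult_left_mono abs_ge_zero norm_scaleR distrib_right mult.assoc)
  qed
  then show ?thesis by blast
qed

lemma resolvent_quotient_root_eq:
  fixes x :: 'a
  assumes d: "d \<noteq> 0" and sum: "r1 + r2 = s + t + 1 / d" and prod: "r1 * r2 = s * t"
  defines "v \<equiv> resolvent (a + s) x" and "w \<equiv> resolvent (a + t) (resolvent (a + s) x)"
  defines "z \<equiv> v + (t - r2) *\<^sub>R w"
  shows "z \<in> D" "L z - (a + r1) *\<^sub>R z = - (1 / d) *\<^sub>R (resolvent_quotient a s t x - d *\<^sub>R x)"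
    "L w - (a + r2) *\<^sub>R w = z" "resolvent_quotient a s t x = z + r2 *\<^sub>R w"
proof -
  note vw = resolvent_quotient_eq[of x, folded v_def w_def]
  show "z \<in> D" unfolding z_def using vw by (intro D_add D_scale)
  have Lv: "L v = x + (a + s) *\<^sub>R v" and Lw: "L w = v + (a + t) *\<^sub>R w"
    using vw by (simp_all add: algebra_simps)
  have Lz: "L z = L v + (t - r2) *\<^sub>R L w"
    unfolding z_def using L_add[OF vw(1) D_scale[OF vw(2)]] L_scale[OF vw(2)] by simp
  have c1: "(a + s) + (t - r2) - (a + r1) = - (1 / d)" using sum by simp
  have c2: "(t - r2) * (a + t) - (a + r1) * (t - r2) = - (t / d)"
  proof -
    have "(t - r2) * (a + t) - (a + r1) * (t - r2) = t * t - t * (r1 + r2) + r1 * r2"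
      by (simp add: algebra_simps)
    then show ?thesis unfolding sum prod using d by (simp add: field_simps)
  qed
  have "L z - (a + r1) *\<^sub>R z = x + ((a + s) + (t - r2) - (a + r1)) *\<^sub>R v
      + ((t - r2) * (a + t) - (a + r1) * (t - r2)) *\<^sub>R w"
    unfolding Lz unfolding Lv Lw z_def by (simp add: algebra_simps)
  also have "\<dots> = - (1 / d) *\<^sub>R (resolvent_quotient a s t x - d *\<^sub>R x)"
    unfolding c1 c2 vw(5) using d by (simp add: algebra_simps)
  finally show "L z - (a + r1) *\<^sub>R z = - (1 / d) *\<^sub>R (resolvent_quotient a s t x - d *\<^sub>R x)" .
  show "L w - (a + r2) *\<^sub>R w = z" unfolding z_def Lw by (simp add: algebra_simps)
  show "resolvent_quotient a s t x = z + r2 *\<^sub>R w" unfolding vw(5) z_def by (simp add: algebra_simps)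
qed

lemma resolvent_quotient_approx_eigenvector_dichotomy:
  assumes d: "d \<noteq> 0" and sum: "r1 + r2 = s + t + 1 / d" and prod: "r1 * r2 = s * t" and "\<delta> > 0"
  shows "\<exists>\<epsilon>>0. \<forall>x. norm x = 1 \<longrightarrow> norm (resolvent_quotient a s t x - d *\<^sub>R x) < \<epsilon> \<longrightarrow>
    (\<exists>u\<in>D. norm u = 1 \<and> norm (L u - (a + r1) *\<^sub>R u) < \<delta>) \<or>
    (\<exists>u\<in>D. norm u = 1 \<and> norm (L u - (a + r2) *\<^sub>R u) < \<delta>)"
proof -
  define \<eta> where "\<eta> = min (\<bar>d\<bar> / 4) (\<delta> * \<bar>d\<bar> / (4 * (\<bar>r2\<bar> + 1)))"
  define \<epsilon> where "\<epsilon> = min (\<bar>d\<bar> / 4) (\<delta> * \<bar>d\<bar> * \<eta> / 2)"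
  have "\<eta> > 0" unfolding \<eta>_def using d \<open>\<delta> > 0\<close> by (simp add: add_pos_nonneg)
  then have "\<epsilon> > 0" unfolding \<epsilon>_def using d \<open>\<delta> > 0\<close> by simp
  have "(\<exists>u\<in>D. norm u = 1 \<and> norm (L u - (a + r1) *\<^sub>R u) < \<delta>) \<or>
        (\<exists>u\<in>D. norm u = 1 \<and> norm (L u - (a + r2) *\<^sub>R u) < \<delta>)"
    if x: "norm x = 1" "norm (resolvent_quotient a s t x - d *\<^sub>R x) < \<epsilon>" for x
  proof -
    define w where "w = resolvent (a + t) (resolvent (a + s) x)"
    define z where "z = resolvent (a + s) x + (t - r2) *\<^sub>R w"
    note zw = resolvent_quotient_root_eq[OF d sum prod, of x, folded w_def, folded z_def]
    have "w \<in> D" unfolding w_def by (rule resolvent_in_D[OF res_t])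
    have Lz: "norm (L z - (a + r1) *\<^sub>R z) < \<epsilon> / \<bar>d\<bar>"
      unfolding zw(2) using x(2) d by (simp add: divide_simps)
    have "\<bar>d\<bar> \<le> norm (resolvent_quotient a s t x) + norm (resolvent_quotient a s t x - d *\<^sub>R x)"
      using norm_triangle_ineq4[of "resolvent_quotient a s t x" "resolvent_quotient a s t x - d *\<^sub>R x"] x(1)
      by simp
    then have big: "\<bar>d\<bar> - \<epsilon> < norm (z + r2 *\<^sub>R w)" using x(2) zw(4) by simp
    show ?thesis
    proof (cases "\<eta> \<le> norm z")
      case True
      have "\<epsilon> / \<bar>d\<bar> \<le> \<delta> * \<eta> / 2" unfolding \<epsilon>_def using d by (simp add: divide_simps min_def)
      also have "\<dots> < \<delta> * norm z" using True \<open>\<delta> > 0\<close> \<open>\<eta> > 0\<close> by (simp add: divide_simps)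
      finally have "norm (L z - (a + r1) *\<^sub>R z) < \<delta> * norm z" using Lz by simp
      then show ?thesis using True \<open>\<eta> > 0\<close> zw(1)
        by (intro disjI1 normalized_approx_eigenvector) (auto intro: L_scale D_scale)
    next
      case False
      have "norm (z + r2 *\<^sub>R w) \<le> norm z + \<bar>r2\<bar> * norm w" using norm_triangle_ineq[of z "r2 *\<^sub>R w"] by simp
      moreover have "\<epsilon> \<le> \<bar>d\<bar> / 4" "\<eta> \<le> \<bar>d\<bar> / 4"
        unfolding \<epsilon>_def \<eta>_def by (rule min.cobounded1)+
      ultimately have "\<bar>d\<bar> / 2 < \<bar>r2\<bar> * norm w" using big False by simp
      also have "\<dots> \<le> (\<bar>r2\<bar> + 1) * norm w" by (simp add: mult_right_mono)
      finally have "\<bar>d\<bar> < (4 * (\<bar>r2\<bar> + 1)) * (norm w / 2)" by (simp add: algebra_simps)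
      then have "\<bar>d\<bar> / (4 * (\<bar>r2\<bar> + 1)) < norm w / 2"
        by (simp add: pos_divide_less_eq add_pos_nonneg mult.commute)
      then have "\<delta> * \<bar>d\<bar> / (4 * (\<bar>r2\<bar> + 1)) < \<delta> * norm w / 2"
        using mult_strict_left_mono[OF _ \<open>\<delta> > 0\<close>] by fastforce
      then have "norm (L w - (a + r2) *\<^sub>R w) < \<delta> * norm w" unfolding zw(3)
        using False \<open>\<delta> > 0\<close> mult_nonneg_nonneg[of \<delta> "norm w", OF _ norm_ge_zero]
          min.cobounded2[of "\<bar>d\<bar> / 4" "\<delta> * \<bar>d\<bar> / (4 * (\<bar>r2\<bar> + 1))"]
        unfolding \<eta>_def by linarith
      moreover have "w \<noteq> 0" using \<open>\<bar>d\<bar> / 2 < \<bar>r2\<bar> * norm w\<close> d by auto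
      ultimately show ?thesis using \<open>w \<in> D\<close>
        by (intro disjI2 normalized_approx_eigenvector) (auto intro: L_scale D_scale)
    qed
  qed
  then show ?thesis using \<open>\<epsilon> > 0\<close> by blast
qed

lemma resolvent_quotient_approx_eigenvalue_real:
  assumes ap: "approx_eigenvalue UNIV (resolvent_quotient a s t) d" and d: "d \<noteq> 0"
    and "s \<noteq> 0" "t \<noteq> 0" and disc: "0 \<le> d\<^sup>2 * (s - t)\<^sup>2 + 2 * d * (s + t) + 1"
  shows "\<exists>r. r \<noteq> 0 \<and> d * (r - s) * (r - t) = r \<and> approx_eigenvalue D L (a + r)"
proof -
  define S where "S = sqrt (d\<^sup>2 * (s - t)\<^sup>2 + 2 * d * (s + t) + 1)"
  define r1 where "r1 = (d * (s + t) + 1 + S) / (2 * d)"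
  define r2 where "r2 = (d * (s + t) + 1 - S) / (2 * d)"
  have "S\<^sup>2 = d\<^sup>2 * (s - t)\<^sup>2 + 2 * d * (s + t) + 1" unfolding S_def using disc by simp
  then have sum: "r1 + r2 = s + t + 1 / d" and prod: "r1 * r2 = s * t"
    unfolding r1_def r2_def using d by (simp_all add: field_simps power2_eq_square)
  have root: "d * (r - s) * (r - t) = r" if "r = r1 \<or> r = r2" for r
  proof -
    have "d * (r - s) * (r - t) = d * r * (r1 + r2 - s - t) + d * (s * t - r1 * r2)"
      using that by (auto simp: algebra_simps power2_eq_square)
    then show ?thesis using sum prod d by simp
  qed
  have "r1 \<noteq> 0" "r2 \<noteq> 0" using prod \<open>s \<noteq> 0\<close> \<open>t \<noteq> 0\<close> by auto
  have "approx_eigenvalue D L (a + r1) \<or> approx_eigenvalue D L (a + r2)"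
  proof (rule approx_eigenvalue_disj)
    fix \<delta> :: real assume "\<delta> > 0"
    then obtain \<epsilon> where "\<epsilon> > 0" and "\<forall>x. norm x = 1 \<longrightarrow> norm (resolvent_quotient a s t x - d *\<^sub>R x) < \<epsilon> \<longrightarrow>
        (\<exists>u\<in>D. norm u = 1 \<and> norm (L u - (a + r1) *\<^sub>R u) < \<delta>) \<or>
        (\<exists>u\<in>D. norm u = 1 \<and> norm (L u - (a + r2) *\<^sub>R u) < \<delta>)"
      using resolvent_quotient_approx_eigenvector_dichotomy[OF d sum prod] by blast
    then show "(\<exists>u\<in>D. norm u = 1 \<and> norm (L u - (a + r1) *\<^sub>R u) < \<delta>) \<or>
        (\<exists>u\<in>D. norm u = 1 \<and> norm (L u - (a + r2) *\<^sub>R u) < \<delta>)"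
      using ap unfolding approx_eigenvalue_def by blast
  qed
  then show ?thesis using root \<open>r1 \<noteq> 0\<close> \<open>r2 \<noteq> 0\<close> by blast
qed

text \<open>When the quadratic \<open>d (r - s) (r - t) - r\<close> has no real root, the quadratic form below is positive
  definite, and it is controlled by the defect \<open>Q x - d x\<close>.\<close>

lemma resolvent_quotient_quadratic_form:
  fixes x :: 'a
  assumes d: "d \<noteq> 0"
  defines "v \<equiv> resolvent (a + s) x" and "w \<equiv> resolvent (a + t) (resolvent (a + s) x)"
  defines "c \<equiv> (1 - d * (t - s)) / (2 * d)"
    and "\<kappa> \<equiv> - (d\<^sup>2 * (s - t)\<^sup>2 + 2 * d * (s + t) + 1) / (4 * d\<^sup>2)"
  shows "d * (norm (v - c *\<^sub>R w) ^ 2 + \<kappa> * norm w ^ 2) = - inner (resolvent_quotient a s t x - d *\<^sub>R x) w"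
proof -
  note vw = resolvent_quotient_eq[of x, folded v_def w_def]
  have xw: "inner x w = inner v v + (t - s) * inner v w"
  proof -
    have "inner x w = inner (L v) w - (a + s) * inner v w" unfolding vw(3)[symmetric] by (simp add: inner_diff_left)
    also have "inner (L v) w = inner v (L w)" using L_symmetric vw(1,2) by blast
    also have "L w = v + (a + t) *\<^sub>R w" using vw(4) by (simp add: algebra_simps)
    finally show ?thesis by (simp add: inner_add_right algebra_simps)
  qed
  have ck: "c\<^sup>2 + \<kappa> = - t / d" unfolding c_def \<kappa>_def using d by (simp add: field_simps power2_eq_square)
  have Qe: "norm (v - c *\<^sub>R w) ^ 2 + \<kappa> * norm w ^ 2 = inner v v - 2 * c * inner v w + (c\<^sup>2 + \<kappa>) * inner w w"
    unfolding norm_diff_scaleR_power2 by (simp add: power2_norm_eq_inner[symmetric] algebra_simps)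
  have Ew: "inner (resolvent_quotient a s t x - d *\<^sub>R x) w = inner v w + t * inner w w - d * (inner v v + (t - s) * inner v w)"
    unfolding vw(5) xw[symmetric] by (simp add: inner_add_left inner_diff_left)
  show ?thesis unfolding Qe Ew ck unfolding c_def using d by (simp add: field_simps)
qed

lemma resolvent_quotient_norm_le_defect:
  assumes disc: "d\<^sup>2 * (s - t)\<^sup>2 + 2 * d * (s + t) + 1 < 0"
  shows "\<exists>K. \<forall>x. norm (resolvent_quotient a s t x) \<le> K * norm (resolvent_quotient a s t x - d *\<^sub>R x)"
proof -
  have d: "d \<noteq> 0" using disc by auto
  define c where "c = (1 - d * (t - s)) / (2 * d)"
  define \<kappa> where "\<kappa> = - (d\<^sup>2 * (s - t)\<^sup>2 + 2 * d * (s + t) + 1) / (4 * d\<^sup>2)"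
  have "\<kappa> > 0" unfolding \<kappa>_def using disc d by (simp add: divide_simps)
  define K where "K = (1 / sqrt \<kappa> + \<bar>t + c\<bar> / \<kappa>) / \<bar>d\<bar>"
  have "norm (resolvent_quotient a s t x) \<le> K * norm (resolvent_quotient a s t x - d *\<^sub>R x)" for x
  proof -
    define v where "v = resolvent (a + s) x"
    define w where "w = resolvent (a + t) (resolvent (a + s) x)"
    define A where "A = norm (resolvent_quotient a s t x - d *\<^sub>R x) / \<bar>d\<bar>"
    have "d * (norm (v - c *\<^sub>R w) ^ 2 + \<kappa> * norm w ^ 2) = - inner (resolvent_quotient a s t x - d *\<^sub>R x) w"
      unfolding v_def w_def c_def \<kappa>_def by (rule resolvent_quotient_quadratic_form[OF d])
    moreover have "0 \<le> norm (v - c *\<^sub>R w) ^ 2 + \<kappa> * norm w ^ 2" using \<open>\<kappa> > 0\<close> by simp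
    ultimately have "\<bar>d\<bar> * (norm (v - c *\<^sub>R w) ^ 2 + \<kappa> * norm w ^ 2) = \<bar>inner (resolvent_quotient a s t x - d *\<^sub>R x) w\<bar>"
      by (metis abs_minus_cancel abs_mult abs_of_nonneg)
    also have "\<dots> \<le> norm (resolvent_quotient a s t x - d *\<^sub>R x) * norm w" by (rule Cauchy_Schwarz_ineq2)
    finally have "(norm (v - c *\<^sub>R w))\<^sup>2 + \<kappa> * (norm w)\<^sup>2 \<le> A * norm w"
      unfolding A_def using d by (simp add: field_simps)
    note bounds = sum_squares_le_linear[OF this \<open>\<kappa> > 0\<close>]
    have vt: "v + t *\<^sub>R w = (v - c *\<^sub>R w) + (t + c) *\<^sub>R w" by (simp add: algebra_simps)
    have "norm (v + t *\<^sub>R w) \<le> norm (v - c *\<^sub>R w) + \<bar>t + c\<bar> * norm w"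
      unfolding vt using norm_triangle_ineq[of "v - c *\<^sub>R w" "(t + c) *\<^sub>R w"] by simp
    also have "\<dots> \<le> A / sqrt \<kappa> + \<bar>t + c\<bar> * (A / \<kappa>)"
      using bounds unfolding A_def by (intro add_mono mult_left_mono) auto
    also have "\<dots> = K * norm (resolvent_quotient a s t x - d *\<^sub>R x)"
      unfolding K_def A_def using \<open>\<kappa> > 0\<close> d by (simp add: field_simps)
    finally show ?thesis using resolvent_quotient_eq(5)[of x] unfolding v_def w_def by simp
  qed
  then show ?thesis by blast
qed

lemma resolvent_quotient_not_approx_eigenvalue_complex:
  assumes disc: "d\<^sup>2 * (s - t)\<^sup>2 + 2 * d * (s + t) + 1 < 0"
  shows "\<not> approx_eigenvalue UNIV (resolvent_quotient a s t) d"
proof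
  assume ap: "approx_eigenvalue UNIV (resolvent_quotient a s t) d"
  have "d \<noteq> 0" using disc by auto
  obtain K where K: "\<forall>x. norm (resolvent_quotient a s t x) \<le> K * norm (resolvent_quotient a s t x - d *\<^sub>R x)"
    using resolvent_quotient_norm_le_defect[OF disc] by blast
  define \<epsilon> where "\<epsilon> = \<bar>d\<bar> / (\<bar>K\<bar> + 1)"
  have "\<epsilon> > 0" unfolding \<epsilon>_def using \<open>d \<noteq> 0\<close> by (simp add: add_pos_nonneg)
  then obtain x where x: "norm x = 1" "norm (resolvent_quotient a s t x - d *\<^sub>R x) < \<epsilon>"
    using ap unfolding approx_eigenvalue_def by blast
  have "\<bar>d\<bar> \<le> norm (resolvent_quotient a s t x) + norm (resolvent_quotient a s t x - d *\<^sub>R x)"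
    using norm_triangle_ineq4[of "resolvent_quotient a s t x" "resolvent_quotient a s t x - d *\<^sub>R x"] x(1)
    by simp
  also have "\<dots> \<le> (\<bar>K\<bar> + 1) * norm (resolvent_quotient a s t x - d *\<^sub>R x)"
    using K[rule_format, of x] mult_right_mono[OF abs_ge_self[of K] norm_ge_zero[of "resolvent_quotient a s t x - d *\<^sub>R x"]]
    by (simp add: algebra_simps)
  also have "\<dots> < (\<bar>K\<bar> + 1) * \<epsilon>" using x(2) by (intro mult_strict_left_mono) (auto simp: add_pos_nonneg)
  finally show False unfolding \<epsilon>_def by simp
qed

end

end

section \<open>A simple isolated eigenvalue\<close>

lemma projH_add: "projH phi (x + y) = projH phi x + projH phi y"
  and projH_diff: "projH phi (x - y) = projH phi x - projH phi y"
  and projH_minus: "projH phi (- x) = - projH phi x"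
  unfolding projH_def by (simp_all add: inner_add_left inner_diff_left algebra_simps)

lemma projH_HY: "y \<in> HY phi \<Longrightarrow> projH phi y = y"
  unfolding HY_def projH_def by simp

lemma subspace_HY: "subspace (HY phi)"
  unfolding subspace_def HY_def by (simp add: inner_add_left)

lemma closed_HY: "closed (HY phi)"
  unfolding HY_def by (intro closed_Collect_eq continuous_intros)

locale simple_eigenvalue = self_adjoint_operator +
  fixes lam :: real and phi :: 'a
  assumes eigen: "simple_isolated_eigen D L lam phi"
begin

lemma phi_in_D: "phi \<in> D" and norm_phi: "norm phi = 1" and L_phi: "L phi = lam *\<^sub>R phi"
  and eigenvector_multiple: "\<And>u. u \<in> D \<Longrightarrow> L u = lam *\<^sub>R u \<Longrightarrow> \<exists>c. u = c *\<^sub>R phi"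
  and isolated: "\<exists>e>0. op_spectrum D L \<inter> {lam - e <..< lam + e} = {lam}"
  using eigen unfolding simple_isolated_eigen_def by auto

lemma inner_phi_phi: "inner phi phi = 1"
  using norm_phi by (simp add: norm_eq_sqrt_inner)

lemma projH_in_HY: "projH phi y \<in> HY phi"
  unfolding HY_def projH_def using inner_phi_phi by (simp add: inner_diff_left)

lemma projH_scaleR_phi: "projH phi (c *\<^sub>R phi) = 0"
  unfolding projH_def using inner_phi_phi by simp

lemma subspace_HX: "subspace (HX D phi)"
  unfolding HX_def using subspace_D subspace_HY by (rule subspace_inter)

lemma L_HX: "u \<in> HX D phi \<Longrightarrow> L u \<in> HY phi"
  using L_symmetric[OF _ phi_in_D, of u] L_phi unfolding HX_def HY_def by simp

lemma lam_in_spectrum: "lam \<in> op_spectrum D L"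
proof -
  have "L phi - lam *\<^sub>R phi = L 0 - lam *\<^sub>R 0" using L_phi L_zero by simp
  moreover have "phi \<noteq> 0" using norm_phi by auto
  ultimately have "\<not> inj_on (\<lambda>u. L u - lam *\<^sub>R u) D"
    using phi_in_D subspace_D subspace_0 unfolding inj_on_def by blast
  then show ?thesis unfolding op_spectrum_def bij_betw_def by blast
qed

lemma resolvent_HY:
  assumes "\<mu> \<notin> op_spectrum D L" "y \<in> HY phi"
  shows "resolvent \<mu> y \<in> HY phi"
proof -
  have "lam \<noteq> \<mu>" using assms(1) lam_in_spectrum by auto
  have "(lam / (lam - \<mu>)) *\<^sub>R phi - (\<mu> / (lam - \<mu>)) *\<^sub>R phi = phi"
    using \<open>lam \<noteq> \<mu>\<close> by (simp add: scaleR_diff_left[symmetric] diff_divide_distrib[symmetric])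
  then have "L ((1 / (lam - \<mu>)) *\<^sub>R phi) - \<mu> *\<^sub>R (1 / (lam - \<mu>)) *\<^sub>R phi = phi"
    using L_scale[OF phi_in_D] L_phi by simp
  then have "resolvent \<mu> phi = (1 / (lam - \<mu>)) *\<^sub>R phi"
    using \<open>lam \<noteq> \<mu>\<close> by (intro resolvent_unique[OF assms(1)] D_scale phi_in_D) simp
  then show ?thesis
    using resolvent_symmetric[OF assms(1), of y phi] assms(2) unfolding HY_def by simp
qed

definition isolation_radius :: real where
  "isolation_radius = (SOME e. e > 0 \<and> op_spectrum D L \<inter> {lam - e <..< lam + e} = {lam})"

lemma isolation_radius_pos: "isolation_radius > 0"
  and spectrum_near_lam: "op_spectrum D L \<inter> {lam - isolation_radius <..< lam + isolation_radius} = {lam}"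
  using someI_ex[OF isolated] unfolding isolation_radius_def by auto

lemma resolvent_set_near_lam:
  assumes "0 < \<bar>\<mu> - lam\<bar>" "\<bar>\<mu> - lam\<bar> < isolation_radius"
  shows "\<mu> \<notin> op_spectrum D L"
proof
  assume "\<mu> \<in> op_spectrum D L"
  moreover have "\<mu> \<in> {lam - isolation_radius <..< lam + isolation_radius}"
    using assms(2) by (simp add: abs_less_iff)
  ultimately have "\<mu> \<in> {lam}" using spectrum_near_lam by blast
  then show False using assms(1) by simp
qed

lemma resolvent_quotient_norm_bound:
  assumes s: "0 < s" "s \<le> isolation_radius / 2" and t: "0 < t" "t \<le> isolation_radius / 2"
  shows "norm (resolvent_quotient lam s t y) \<le> (4 / isolation_radius) * norm y"
proof -
  let ?\<rho> = isolation_radius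
  have res: "lam + s \<notin> op_spectrum D L" "lam + t \<notin> op_spectrum D L"
    using resolvent_set_near_lam isolation_radius_pos s t by auto
  obtain K where "\<forall>x. norm (resolvent_quotient lam s t x) \<le> K * norm x"
    using bounded_resolvent_quotient[OF res] by blast
  then obtain M d where M: "\<forall>x. norm (resolvent_quotient lam s t x) \<le> M * norm x"
    and d: "\<bar>d\<bar> = M" "approx_eigenvalue UNIV (resolvent_quotient lam s t) d"
    using bounded_symmetric_approx_eigenvalue[OF subspace_UNIV linear_on_resolvent_quotient[OF res]
        _ symmetric_on_resolvent_quotient[OF res], of K] norm_phi by blast
  have "\<bar>d\<bar> \<le> 4 / ?\<rho>"
  proof (cases "d = 0")
    case False
    then have "0 \<le> d\<^sup>2 * (s - t)\<^sup>2 + 2 * d * (s + t) + 1"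
      using resolvent_quotient_not_approx_eigenvalue_complex[OF res, of d] d(2) by linarith
    then obtain r where r: "r \<noteq> 0" "d * (r - s) * (r - t) = r" "approx_eigenvalue D L (lam + r)"
      using resolvent_quotient_approx_eigenvalue_real[OF res d(2) False] s t by auto
    then have "?\<rho> \<le> \<bar>r\<bar>"
      using approx_eigenvalue_in_spectrum[OF r(3)] resolvent_set_near_lam[of "lam + r"] by force
    then show ?thesis using quadratic_root_bound r(1,2) isolation_radius_pos s t by blast
  qed (use isolation_radius_pos in simp)
  then show ?thesis using M d(1) by (metis mult_right_mono norm_ge_zero order_trans)
qed

lemma scaled_resolvent_lipschitz:
  assumes "0 < s" "s \<le> isolation_radius / 2" "0 < t" "t \<le> isolation_radius / 2"
  shows "norm (s *\<^sub>R resolvent (lam + s) y - t *\<^sub>R resolvent (lam + t) y)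
           \<le> (4 / isolation_radius) * norm y * \<bar>s - t\<bar>"
proof -
  have res: "lam + s \<notin> op_spectrum D L" "lam + t \<notin> op_spectrum D L"
    using resolvent_set_near_lam isolation_radius_pos assms by auto
  show ?thesis
    unfolding resolvent_quotient_diff[OF res]
    using mult_left_mono[OF resolvent_quotient_norm_bound[OF assms, of y] abs_ge_zero[of "s - t"]]
    by (simp add: mult_ac)
qed

text \<open>On \<open>HY\<close> the resolvent has no pole at \<open>lam\<close>: the limit of \<open>s R(lam + s) y\<close> as \<open>s \<rightarrow> 0\<close>
  would be an eigenvector orthogonal to \<open>phi\<close>.\<close>

lemma scaled_resolvent_tendsto_zero:
  assumes y: "y \<in> HY phi" and \<sigma>: "\<sigma> \<longlonglongrightarrow> 0" "\<And>k. 0 < \<sigma> k" "\<And>k. \<sigma> k \<le> isolation_radius / 2"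
  shows "(\<lambda>k. \<sigma> k *\<^sub>R resolvent (lam + \<sigma> k) y) \<longlonglongrightarrow> 0"
proof -
  define p where "p k = \<sigma> k *\<^sub>R resolvent (lam + \<sigma> k) y" for k
  define K where "K = (4 / isolation_radius) * norm y"
  have res: "lam + \<sigma> k \<notin> op_spectrum D L" for k
    using resolvent_set_near_lam isolation_radius_pos \<sigma>(2,3)[of k] by auto
  have "Cauchy p"
  proof (rule Cauchy_of_dist_le_null)
    show "(\<lambda>k. K * \<sigma> k) \<longlonglongrightarrow> 0" using tendsto_mult_right_zero[OF \<sigma>(1)] .
    have "K \<ge> 0" unfolding K_def using isolation_radius_pos by simp
    then show "dist (p m) (p n) \<le> K * \<sigma> m + K * \<sigma> n" for m n
      using scaled_resolvent_lipschitz[OF \<sigma>(2)[of m] \<sigma>(3)[of m] \<sigma>(2)[of n] \<sigma>(3)[of n], of y] \<sigma>(2)[of m] \<sigma>(2)[of n]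
      unfolding p_def K_def dist_norm
      by (smt (verit, best) distrib_left mult_left_mono)
  qed
  then obtain l where l: "p \<longlonglongrightarrow> l" using Cauchy_convergent_iff convergent_def by blast
  have pHX: "p k \<in> HX D phi" for k
    unfolding p_def HX_def
    using D_scale[OF resolvent_in_D[OF res]] subspace_scale[OF subspace_HY resolvent_HY[OF res y]] by blast
  have Lp: "L (p k) = lam *\<^sub>R p k + \<sigma> k *\<^sub>R (p k + y)" for k
    using resolvent_eq[OF res, of k y] L_scale[OF resolvent_in_D[OF res]]
    unfolding p_def by (simp add: algebra_simps)
  have "(\<lambda>k. L (p k)) \<longlonglongrightarrow> lam *\<^sub>R l + 0 *\<^sub>R (l + y)"
    unfolding Lp by (intro tendsto_intros l \<sigma>(1))
  then have "l \<in> D" "L l = lam *\<^sub>R l" using L_closed[of p l] pHX l unfolding HX_def by auto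
  then obtain c where c: "l = c *\<^sub>R phi" using eigenvector_multiple by blast
  have "l \<in> HY phi" using closed_HY l pHX unfolding HX_def by (auto intro: closed_sequentially)
  then have "l = 0" using c inner_phi_phi unfolding HY_def by simp
  then show ?thesis using l unfolding p_def by simp
qed

lemma resolvent_HY_bound:
  assumes s: "0 < s" "s \<le> isolation_radius / 2" and y: "y \<in> HY phi"
  shows "norm (resolvent (lam + s) y) \<le> (4 / isolation_radius) * norm y"
proof -
  define \<sigma> where "\<sigma> k = s / of_nat (Suc k)" for k
  define K where "K = (4 / isolation_radius) * norm y"
  have \<sigma>: "0 < \<sigma> k" "\<sigma> k \<le> s" for k unfolding \<sigma>_def using s by (auto simp: field_simps)
  have \<sigma>_small: "\<sigma> k \<le> isolation_radius / 2" for k using \<sigma>(2) s(2) by (rule order_trans)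
  have "\<sigma> \<longlonglongrightarrow> 0" unfolding \<sigma>_def by (rule LIMSEQ_Suc[OF lim_const_over_n])
  then have "(\<lambda>k. s *\<^sub>R resolvent (lam + s) y - \<sigma> k *\<^sub>R resolvent (lam + \<sigma> k) y)
      \<longlonglongrightarrow> s *\<^sub>R resolvent (lam + s) y - 0"
    using \<sigma>(1) \<sigma>_small by (intro tendsto_intros scaled_resolvent_tendsto_zero y)
  moreover have "norm (s *\<^sub>R resolvent (lam + s) y - \<sigma> k *\<^sub>R resolvent (lam + \<sigma> k) y) \<le> K * s" for k
  proof -
    have "K \<ge> 0" unfolding K_def using isolation_radius_pos by simp
    moreover have "\<bar>s - \<sigma> k\<bar> \<le> s" using \<sigma>[of k] by simp
    ultimately show ?thesis
      using scaled_resolvent_lipschitz[OF s, of "\<sigma> k" y] \<sigma>[of k] s unfolding K_def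
      by (smt (verit) mult_left_mono)
  qed
  ultimately have "norm (s *\<^sub>R resolvent (lam + s) y) \<le> K * s"
    by (intro tendsto_upperbound[OF tendsto_norm]) (auto simp: eventually_sequentially)
  then have "s * norm (resolvent (lam + s) y) \<le> s * K" using s by (simp add: mult.commute)
  then show ?thesis unfolding K_def using s(1) by (rule mult_left_le_imp_le)
qed

lemma L_minus_lam_bounded_below_HX:
  "\<exists>\<gamma>>0. \<forall>u\<in>HX D phi. \<gamma> * norm u \<le> norm (L u - lam *\<^sub>R u)"
proof -
  define s where "s = isolation_radius / 8"
  have s: "0 < s" "s \<le> isolation_radius / 2" unfolding s_def using isolation_radius_pos by auto
  have res: "lam + s \<notin> op_spectrum D L"
    using resolvent_set_near_lam isolation_radius_pos s by auto
  have "s * norm u \<le> norm (L u - lam *\<^sub>R u)" if u: "u \<in> HX D phi" for u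
  proof -
    define y where "y = L u - (lam + s) *\<^sub>R u"
    have uD: "u \<in> D" and yH: "y \<in> HY phi"
      using u L_HX subspace_HY unfolding y_def HX_def by (auto intro: subspace_diff subspace_scale)
    have "u = resolvent (lam + s) y" unfolding y_def using resolvent_unique[OF res uD] by simp
    then have n1: "norm u \<le> (4 / isolation_radius) * norm y" using resolvent_HY_bound[OF s yH] by simp
    have n2: "norm y \<le> norm (L u - lam *\<^sub>R u) + s * norm u"
      using norm_triangle_ineq4[of "L u - lam *\<^sub>R u" "s *\<^sub>R u"] s unfolding y_def by (simp add: algebra_simps)
    have "norm u \<le> (4 / isolation_radius) * (norm (L u - lam *\<^sub>R u) + s * norm u)"
      using order_trans[OF n1 mult_left_mono[OF n2]] isolation_radius_pos by simp
    then have "norm u \<le> (4 / isolation_radius) * norm (L u - lam *\<^sub>R u) + norm u / 2"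
      unfolding s_def using isolation_radius_pos by (simp add: algebra_simps)
    then show ?thesis unfolding s_def using isolation_radius_pos by (simp add: field_simps)
  qed
  then show ?thesis using s by blast
qed

lemma not_approx_eigenvalue_lam_HX: "\<not> approx_eigenvalue (HX D phi) L lam"
proof
  assume ap: "approx_eigenvalue (HX D phi) L lam"
  obtain \<gamma> where "\<gamma> > 0" and \<gamma>: "\<forall>u\<in>HX D phi. \<gamma> * norm u \<le> norm (L u - lam *\<^sub>R u)"
    using L_minus_lam_bounded_below_HX by blast
  then obtain x where "x \<in> HX D phi" "norm x = 1" "norm (L x - lam *\<^sub>R x) < \<gamma>"
    using ap unfolding approx_eigenvalue_def by blast
  then show False using \<gamma> by force
qed

lemma resolvent_HY_Cauchy:
  assumes y: "y \<in> HY phi" and \<sigma>: "\<sigma> \<longlonglongrightarrow> 0" "\<And>k. 0 < \<sigma> k" "\<And>k. \<sigma> k \<le> isolation_radius / 2"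
  shows "Cauchy (\<lambda>k. resolvent (lam + \<sigma> k) y)"
proof -
  obtain \<gamma> where "\<gamma> > 0" and \<gamma>: "\<forall>u\<in>HX D phi. \<gamma> * norm u \<le> norm (L u - lam *\<^sub>R u)"
    using L_minus_lam_bounded_below_HX by blast
  define K where "K = (4 / isolation_radius) * norm y"
  have res: "lam + \<sigma> k \<notin> op_spectrum D L" for k
    using resolvent_set_near_lam isolation_radius_pos \<sigma>(2,3)[of k] by auto
  define u where "u k = resolvent (lam + \<sigma> k) y" for k
  have uHX: "u k \<in> HX D phi" for k
    unfolding u_def HX_def using resolvent_in_D[OF res] resolvent_HY[OF res y] by blast
  have Lu: "L (u k) - lam *\<^sub>R u k = y + \<sigma> k *\<^sub>R u k" for k
    using resolvent_eq[OF res, of k y] unfolding u_def by (simp add: algebra_simps)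
  have "Cauchy u"
  proof (rule Cauchy_of_dist_le_null)
    show "(\<lambda>k. \<sigma> k * K / \<gamma>) \<longlonglongrightarrow> 0"
      using tendsto_mult_left_zero[OF \<sigma>(1)] by (auto intro: tendsto_divide_zero)
    fix m n
    have "\<gamma> * norm (u m - u n) \<le> norm (L (u m - u n) - lam *\<^sub>R (u m - u n))"
      using \<gamma> subspace_diff[OF subspace_HX uHX uHX] by blast
    also have "L (u m - u n) - lam *\<^sub>R (u m - u n) = \<sigma> m *\<^sub>R u m - \<sigma> n *\<^sub>R u n"
      using L_diff[of "u m" "u n"] uHX[of m] uHX[of n] Lu[of m] Lu[of n] unfolding HX_def
      by (simp add: algebra_simps)
    also have "norm \<dots> \<le> \<sigma> m * K + \<sigma> n * K"
      using norm_triangle_ineq4[of "\<sigma> m *\<^sub>R u m" "\<sigma> n *\<^sub>R u n"] \<sigma>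
        resolvent_HY_bound[OF \<sigma>(2,3) y] unfolding u_def K_def
      by (smt (verit) mult_left_mono norm_scaleR abs_of_pos)
    finally show "dist (u m) (u n) \<le> \<sigma> m * K / \<gamma> + \<sigma> n * K / \<gamma>"
      using \<open>\<gamma> > 0\<close> by (simp add: dist_norm field_simps)
  qed
  then show ?thesis unfolding u_def .
qed

lemma L_minus_lam_surj_HX:
  assumes y: "y \<in> HY phi"
  shows "\<exists>u\<in>HX D phi. L u - lam *\<^sub>R u = y"
proof -
  define \<sigma> where "\<sigma> k = (isolation_radius / 2) / of_nat (Suc k)" for k
  have \<sigma>: "0 < \<sigma> k" "\<sigma> k \<le> isolation_radius / 2" for k
    unfolding \<sigma>_def using isolation_radius_pos by (auto simp: field_simps)
  have "\<sigma> \<longlonglongrightarrow> 0" unfolding \<sigma>_def by (rule LIMSEQ_Suc[OF lim_const_over_n])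
  have res: "lam + \<sigma> k \<notin> op_spectrum D L" for k
    using resolvent_set_near_lam isolation_radius_pos \<sigma>[of k] by auto
  define u where "u k = resolvent (lam + \<sigma> k) y" for k
  have uHX: "u k \<in> HX D phi" for k
    unfolding u_def HX_def using resolvent_in_D[OF res] resolvent_HY[OF res y] by blast
  have Lu: "L (u k) = y + \<sigma> k *\<^sub>R u k + lam *\<^sub>R u k" for k
    using resolvent_eq[OF res, of k y] unfolding u_def by (simp add: algebra_simps)
  obtain l where l: "u \<longlonglongrightarrow> l"
    using resolvent_HY_Cauchy[OF y \<open>\<sigma> \<longlonglongrightarrow> 0\<close> \<sigma>] Cauchy_convergent_iff convergent_def
    unfolding u_def by blast
  have "(\<lambda>k. L (u k)) \<longlonglongrightarrow> y + 0 *\<^sub>R l + lam *\<^sub>R l"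
    unfolding Lu by (intro tendsto_intros l \<open>\<sigma> \<longlonglongrightarrow> 0\<close>)
  then have "l \<in> D" "L l = y + lam *\<^sub>R l" using L_closed[of u l] uHX l unfolding HX_def by auto
  moreover have "l \<in> HY phi" using closed_HY l uHX unfolding HX_def by (auto intro: closed_sequentially)
  ultimately show ?thesis unfolding HX_def by force
qed

end

section \<open>The spectral gap hypothesis\<close>

locale spectral_gap = simple_eigenvalue +
  fixes n :: real
  assumes n_nonneg: "n \<ge> 0" and gap: "{-n..n} \<inter> op_spectrum D L = {lam}"
begin

lemma zero_resolvent_set: "lam \<noteq> 0 \<Longrightarrow> 0 \<notin> op_spectrum D L"
  using gap n_nonneg by auto

lemma L_bounded_below_HX: "\<exists>\<gamma>>0. \<forall>u\<in>HX D phi. \<gamma> * norm u \<le> norm (L u)"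
proof (cases "lam = 0")
  case True
  then show ?thesis using L_minus_lam_bounded_below_HX by simp
next
  case False
  obtain C where C: "\<forall>u\<in>D. norm u \<le> C * norm (L u - 0 *\<^sub>R u)"
    using resolvent_set_bounded_below[OF zero_resolvent_set[OF False]] by blast
  have "(1 / (\<bar>C\<bar> + 1)) * norm u \<le> norm (L u)" if "u \<in> D" for u
  proof -
    have "norm u \<le> (\<bar>C\<bar> + 1) * norm (L u)"
      using C that by (smt (verit) mult_right_mono norm_ge_zero scaleR_zero_left diff_zero abs_ge_self)
    then show ?thesis by (simp add: divide_simps mult.commute add_pos_nonneg)
  qed
  then show ?thesis unfolding HX_def by (intro exI[of _ "1 / (\<bar>C\<bar> + 1)"]) auto
qed

lemma L_surj_HX:
  assumes "y \<in> HY phi"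
  shows "\<exists>u\<in>HX D phi. L u = y"
proof (cases "lam = 0")
  case True
  then show ?thesis using L_minus_lam_surj_HX[OF assms] by simp
next
  case False
  note res = zero_resolvent_set[OF False]
  show ?thesis
    using resolvent_in_D[OF res] resolvent_HY[OF res assms] resolvent_eq[OF res, of y]
    unfolding HX_def by auto
qed

lemma L_unique_HX:
  assumes "u \<in> HX D phi" "v \<in> HX D phi" "L u = L v"
  shows "u = v"
proof -
  obtain \<gamma> where "\<gamma> > 0" and \<gamma>: "\<forall>u\<in>HX D phi. \<gamma> * norm u \<le> norm (L u)"
    using L_bounded_below_HX by blast
  have "\<gamma> * norm (u - v) \<le> norm (L (u - v))" using \<gamma> subspace_diff[OF subspace_HX assms(1,2)] by blast
  also have "L (u - v) = 0" using L_diff assms unfolding HX_def by simp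
  finally show "u = v" using \<open>\<gamma> > 0\<close> by (simp add: mult_le_0_iff)
qed

definition L_inv :: "'a \<Rightarrow> 'a" where
  "L_inv y = (THE u. u \<in> HX D phi \<and> L u = y)"

lemma L_inv: "y \<in> HY phi \<Longrightarrow> L_inv y \<in> HX D phi \<and> L (L_inv y) = y"
  unfolding L_inv_def using L_surj_HX L_unique_HX by (rule_tac theI') blast+

lemma L_inv_L: "u \<in> HX D phi \<Longrightarrow> L_inv (L u) = u"
  using L_inv L_HX L_unique_HX by blast

lemma linear_on_L_inv: "linear_on (HY phi) L_inv"
  unfolding linear_on_def
proof (intro ballI allI conjI)
  fix x y c assume "x \<in> HY phi" "y \<in> HY phi"
  then have x: "L_inv x \<in> HX D phi" "L (L_inv x) = x" and y: "L_inv y \<in> HX D phi" "L (L_inv y) = y"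
    using L_inv by auto
  have "L (L_inv x + L_inv y) = x + y" using L_add x y unfolding HX_def by simp
  then show "L_inv (x + y) = L_inv x + L_inv y" using L_inv_L[OF subspace_add[OF subspace_HX x(1) y(1)]] by simp
  have "L (c *\<^sub>R L_inv x) = c *\<^sub>R x" using L_scale x unfolding HX_def by simp
  then show "L_inv (c *\<^sub>R x) = c *\<^sub>R L_inv x" using L_inv_L[OF subspace_scale[OF subspace_HX x(1)], of c] by simp
qed

lemma symmetric_on_L_inv: "symmetric_on (HY phi) L_inv"
  unfolding symmetric_on_def
proof (intro ballI)
  fix x y assume "x \<in> HY phi" "y \<in> HY phi"
  then have x: "L_inv x \<in> D" "L (L_inv x) = x" and y: "L_inv y \<in> D" "L (L_inv y) = y"
    using L_inv unfolding HX_def by auto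
  have "inner (L_inv x) y = inner (L (L_inv x)) (L_inv y)" using L_symmetric[OF x(1) y(1)] y(2) by simp
  then show "inner (L_inv x) y = inner x (L_inv y)" using x(2) by simp
qed

lemma L_inv_bounded: "\<exists>K. \<forall>y\<in>HY phi. norm (L_inv y) \<le> K * norm y"
proof -
  obtain \<gamma> where "\<gamma> > 0" and \<gamma>: "\<forall>u\<in>HX D phi. \<gamma> * norm u \<le> norm (L u)"
    using L_bounded_below_HX by blast
  have "norm (L_inv y) \<le> (1 / \<gamma>) * norm y" if "y \<in> HY phi" for y
  proof -
    have "\<gamma> * norm (L_inv y) \<le> norm y" using L_inv[OF that] \<gamma> by metis
    then show ?thesis using \<open>\<gamma> > 0\<close> by (simp add: field_simps)
  qed
  then show ?thesis by blast
qed

text \<open>The norm of the symmetric operator \<open>L_inv\<close> is the reciprocal of the distance from \<open>0\<close> to the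
  spectrum of \<open>L\<close> on \<open>HY\<close>, and that spectrum misses \<open>[-n, n]\<close>.\<close>

lemma L_bounded_below_gap: "\<exists>c>n. \<forall>u\<in>HX D phi. c * norm u \<le> norm (L u)"
proof (cases "\<exists>x\<in>HY phi. norm x = 1")
  case False
  have "u = 0" if "u \<in> HX D phi" for u
  proof (rule ccontr)
    assume "u \<noteq> 0"
    then have "(1 / norm u) *\<^sub>R u \<in> HY phi" "norm ((1 / norm u) *\<^sub>R u) = 1"
      using that subspace_scale[OF subspace_HY] unfolding HX_def by auto
    then show False using False by blast
  qed
  then have "\<forall>u\<in>HX D phi. (n + 1) * norm u \<le> norm (L u)" by (metis norm_ge_zero norm_zero mult_zero_right)
  then show ?thesis by (intro exI[of _ "n + 1"]) auto
next
  case True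
  obtain K where "\<forall>y\<in>HY phi. norm (L_inv y) \<le> K * norm y" using L_inv_bounded by blast
  moreover have "L_inv ` HY phi \<subseteq> HY phi" using L_inv unfolding HX_def by blast
  ultimately obtain M d where M: "\<forall>y\<in>HY phi. norm (L_inv y) \<le> M * norm y" and d: "\<bar>d\<bar> = M"
    and ap: "approx_eigenvalue (HY phi) L_inv d"
    using bounded_symmetric_approx_eigenvalue[OF subspace_HY linear_on_L_inv _ symmetric_on_L_inv _ True]
    by blast
  obtain x0 where x0: "x0 \<in> HY phi" "norm x0 = 1" using True by blast
  have "L_inv x0 \<noteq> 0" using L_inv[OF x0(1)] x0(2) L_zero by auto
  then have "0 < norm (L_inv x0)" by simp
  also have "\<dots> \<le> M" using M x0 by fastforce
  finally have "M > 0" .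
  have "approx_eigenvalue (HX D phi) L (1 / d)"
  proof (rule approx_eigenvalue_inverse[OF L_inv _ ap])
    show "c *\<^sub>R u \<in> HX D phi \<and> L (c *\<^sub>R u) = c *\<^sub>R L u" if "u \<in> HX D phi" for u c
      using subspace_scale[OF subspace_HX that] L_scale that unfolding HX_def by auto
    show "d \<noteq> 0" using \<open>M > 0\<close> d by auto
  qed
  moreover have "HX D phi \<subseteq> D" unfolding HX_def by blast
  ultimately have "1 / d \<in> op_spectrum D L" by (rule approx_eigenvalue_in_spectrum)
  moreover have "1 / d \<noteq> lam"
    using not_approx_eigenvalue_lam_HX \<open>approx_eigenvalue (HX D phi) L (1 / d)\<close> by metis
  ultimately have "1 / d \<notin> {-n..n}" using gap by blast
  then have "n < \<bar>1 / d\<bar>" using n_nonneg by (cases "0 \<le> 1 / d") auto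
  then have "n < 1 / M" using d by simp
  moreover have "(1 / M) * norm u \<le> norm (L u)" if "u \<in> HX D phi" for u
  proof -
    have "norm u \<le> M * norm (L u)" using M L_HX[OF that] L_inv_L[OF that] by metis
    then show ?thesis using \<open>M > 0\<close> by (simp add: field_simps)
  qed
  ultimately show ?thesis by blast
qed

lemma perturbed_equation_unique_solution:
  assumes K_HY: "\<And>w. w \<in> HX D phi \<Longrightarrow> K w \<in> HY phi"
    and K_lip: "\<And>w1 w2. w1 \<in> HX D phi \<Longrightarrow> w2 \<in> HX D phi \<Longrightarrow> norm (K w1 - K w2) \<le> n * norm (w1 - w2)"
    and z: "z \<in> HY phi"
  shows "\<exists>!w. w \<in> HX D phi \<and> L w - K w = z"
proof -
  obtain c where "c > n" and c: "\<forall>u\<in>HX D phi. c * norm u \<le> norm (L u)"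
    using L_bounded_below_gap by blast
  then have "c > 0" using n_nonneg by simp
  have L_diff_bound: "c * norm (u - v) \<le> norm (L u - L v)" if "u \<in> HX D phi" "v \<in> HX D phi" for u v
  proof -
    have "c * norm (u - v) \<le> norm (L (u - v))" using c subspace_diff[OF subspace_HX that] by blast
    then show ?thesis using L_diff that unfolding HX_def by simp
  qed
  have "\<exists>!y\<in>HY phi. z + K (L_inv y) = y"
  proof (rule Banach_fix)
    show "complete (HY phi)" using closed_HY complete_eq_closed by blast
    show "HY phi \<noteq> {}" using subspace_HY subspace_0 by blast
    show "0 \<le> n / c" "n / c < 1" using n_nonneg \<open>c > n\<close> \<open>c > 0\<close> by simp_all
    show "(\<lambda>y. z + K (L_inv y)) ` HY phi \<subseteq> HY phi"
      using z K_HY L_inv subspace_add[OF subspace_HY] by blast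
    show "dist (z + K (L_inv x)) (z + K (L_inv y)) \<le> n / c * dist x y" if "x \<in> HY phi" "y \<in> HY phi" for x y
    proof -
      have "norm (K (L_inv x) - K (L_inv y)) \<le> n * norm (L_inv x - L_inv y)" using K_lip L_inv that by blast
      also have "\<dots> \<le> n * (norm (x - y) / c)"
        using L_diff_bound[of "L_inv x" "L_inv y"] L_inv that \<open>c > 0\<close> n_nonneg
        by (intro mult_left_mono) (auto simp: field_simps)
      finally show ?thesis by (simp add: dist_norm)
    qed
  qed
  then obtain y where "y \<in> HY phi" "z + K (L_inv y) = y" by blast
  then have "L_inv y \<in> HX D phi \<and> L (L_inv y) - K (L_inv y) = z" using L_inv by (metis add_diff_cancel_right')
  moreover have "w1 = w2" if "w1 \<in> HX D phi \<and> L w1 - K w1 = z" "w2 \<in> HX D phi \<and> L w2 - K w2 = z" for w1 w2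
  proof -
    have "c * norm (w1 - w2) \<le> norm (L w1 - L w2)" using L_diff_bound that by blast
    also have "L w1 - L w2 = K w1 - K w2" using that by (simp add: algebra_simps)
    also have "norm \<dots> \<le> n * norm (w1 - w2)" using K_lip that by blast
    finally have "(c - n) * norm (w1 - w2) \<le> 0" by (simp add: algebra_simps)
    then show ?thesis using \<open>c > n\<close> by (simp add: mult_le_0_iff)
  qed
  ultimately show ?thesis by blast
qed

end

section \<open>Fibers of the nonlinear map and their asymptotic directions\<close>

definition PN_lipschitz :: "'a::real_inner \<Rightarrow> real \<Rightarrow> ('a \<Rightarrow> 'a) \<Rightarrow> bool" where
  "PN_lipschitz phi n N \<longleftrightarrow> (\<forall>t::real. \<forall>w1\<in>HY phi. \<forall>w2\<in>HY phi.
     norm (projH phi (N (w1 + t *\<^sub>R phi)) - projH phi (N (w2 + t *\<^sub>R phi))) \<le> n * norm (w1 - w2))"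

lemma PN_lipschitz_reflect:
  assumes "PN_lipschitz phi n N"
  shows "PN_lipschitz phi n (\<lambda>x. - N (- x))"
  unfolding PN_lipschitz_def
proof (intro allI ballI)
  fix t :: real and w1 w2 assume "w1 \<in> HY phi" "w2 \<in> HY phi"
  then have "- w1 \<in> HY phi" "- w2 \<in> HY phi" using subspace_neg[OF subspace_HY] by blast+
  then have "norm (projH phi (N (- w1 + (- t) *\<^sub>R phi)) - projH phi (N (- w2 + (- t) *\<^sub>R phi)))
      \<le> n * norm (- w1 - - w2)"
    using assms unfolding PN_lipschitz_def by blast
  then show "norm (projH phi (- N (- (w1 + t *\<^sub>R phi))) - projH phi (- N (- (w2 + t *\<^sub>R phi))))
      \<le> n * norm (w1 - w2)"
    by (simp add: projH_minus norm_minus_commute)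
qed

lemma graph_norm_le: "graph_norm L u \<le> norm u + norm (L u)"
  unfolding graph_norm_def using sqrt_sum_squares_le_sum_abs[of "norm u" "norm (L u)"] by simp

context simple_eigenvalue
begin

lemma projH_F_eq:
  assumes "w \<in> HX D phi"
  shows "projH phi (L (w + t *\<^sub>R phi) - N (w + t *\<^sub>R phi)) = L w - projH phi (N (w + t *\<^sub>R phi))"
proof -
  have "L (w + t *\<^sub>R phi) = L w + (t * lam) *\<^sub>R phi"
    using assms L_add[OF _ D_scale[OF phi_in_D]] L_scale[OF phi_in_D] L_phi unfolding HX_def by simp
  then show ?thesis by (simp add: projH_diff projH_add projH_scaleR_phi projH_HY[OF L_HX[OF assms]])
qed

end

context spectral_gap
begin

context
  fixes N :: "'a \<Rightarrow> 'a"
  assumes lipschitz: "PN_lipschitz phi n N"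
begin

lemma fiber_ex1:
  assumes "z \<in> HY phi"
  shows "\<exists>!w. w \<in> HX D phi \<and> projH phi (L (w + t *\<^sub>R phi) - N (w + t *\<^sub>R phi)) = z"
proof -
  have eq: "(w \<in> HX D phi \<and> projH phi (L (w + t *\<^sub>R phi) - N (w + t *\<^sub>R phi)) = z) \<longleftrightarrow>
      (w \<in> HX D phi \<and> L w - projH phi (N (w + t *\<^sub>R phi)) = z)" for w
    using projH_F_eq[of w t N] by (cases "w \<in> HX D phi") simp_all
  show ?thesis unfolding eq
  proof (rule perturbed_equation_unique_solution[OF projH_in_HY _ assms])
    show "norm (projH phi (N (w1 + t *\<^sub>R phi)) - projH phi (N (w2 + t *\<^sub>R phi))) \<le> n * norm (w1 - w2)"
      if "w1 \<in> HX D phi" "w2 \<in> HX D phi" for w1 w2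
      using lipschitz that unfolding PN_lipschitz_def HX_def by blast
  qed
qed

lemma fiber_w:
  assumes "z \<in> HY phi"
  shows "fiber_w D L N phi z t \<in> HX D phi"
    and "L (fiber_w D L N phi z t) - projH phi (N (fiber_w D L N phi z t + t *\<^sub>R phi)) = z"
proof -
  have "fiber_w D L N phi z t \<in> HX D phi \<and>
      projH phi (L (fiber_w D L N phi z t + t *\<^sub>R phi) - N (fiber_w D L N phi z t + t *\<^sub>R phi)) = z"
    unfolding fiber_w_def by (rule theI'[OF fiber_ex1[OF assms]])
  then show "fiber_w D L N phi z t \<in> HX D phi"
    and "L (fiber_w D L N phi z t) - projH phi (N (fiber_w D L N phi z t + t *\<^sub>R phi)) = z"
    using projH_F_eq by auto
qed

lemma fiber_w_unique:
  assumes "z \<in> HY phi" "w \<in> HX D phi" "projH phi (L (w + t *\<^sub>R phi) - N (w + t *\<^sub>R phi)) = z"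
  shows "fiber_w D L N phi z t = w"
  unfolding fiber_w_def using the1_equality[OF fiber_ex1] assms by blast

end

lemma fiber_w_reflect:
  assumes "PN_lipschitz phi n N" "z \<in> HY phi"
  shows "fiber_w D L N phi z (- s) = - fiber_w D L (\<lambda>x. - N (- x)) phi (- z) s"
proof (rule fiber_w_unique[OF assms])
  let ?w = "fiber_w D L (\<lambda>x. - N (- x)) phi (- z) s"
  have "- z \<in> HY phi" using subspace_neg[OF subspace_HY assms(2)] .
  note w = fiber_w[OF PN_lipschitz_reflect[OF assms(1)] this, of s]
  show "- ?w \<in> HX D phi" using subspace_neg[OF subspace_HX w(1)] .
  have "?w + s *\<^sub>R phi \<in> D" using w(1) phi_in_D unfolding HX_def by (auto intro: D_add D_scale)
  then have "L (- (?w + s *\<^sub>R phi)) = - L (?w + s *\<^sub>R phi)" by (rule L_minus)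
  moreover have "- ?w + (- s) *\<^sub>R phi = - (?w + s *\<^sub>R phi)" by simp
  ultimately have "projH phi (L (- ?w + (- s) *\<^sub>R phi) - N (- ?w + (- s) *\<^sub>R phi))
      = - projH phi (L (?w + s *\<^sub>R phi) - (- N (- (?w + s *\<^sub>R phi))))"
    by (simp add: projH_minus[symmetric])
  also have "\<dots> = z" using w(2) projH_F_eq[OF w(1), of s "\<lambda>x. - N (- x)"] by simp
  finally show "projH phi (L (- ?w + (- s) *\<^sub>R phi) - N (- ?w + (- s) *\<^sub>R phi)) = z" .
qed

end

locale asymptotically_homogeneous = spectral_gap +
  fixes N Ninf :: "'a \<Rightarrow> 'a"
  assumes lipschitz: "PN_lipschitz phi n N"
    and Ninf_limit: "\<forall>u\<in>D. ((\<lambda>t::real. (1 / t) *\<^sub>R projH phi (N (t *\<^sub>R u))) \<longlongrightarrow> Ninf u) at_top"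
begin

lemma Ninf_HY:
  assumes "u \<in> D"
  shows "Ninf u \<in> HY phi"
proof (rule Lim_in_closed_set[OF closed_HY])
  show "((\<lambda>t::real. (1 / t) *\<^sub>R projH phi (N (t *\<^sub>R u))) \<longlongrightarrow> Ninf u) at_top"
    using Ninf_limit assms by blast
  show "\<forall>\<^sub>F t in at_top. (1 / t) *\<^sub>R projH phi (N (t *\<^sub>R u)) \<in> HY phi"
    using subspace_scale[OF subspace_HY projH_in_HY] by simp
qed simp

lemma scaled_PN_lipschitz:
  assumes "t > 0" "w1 \<in> HY phi" "w2 \<in> HY phi"
  shows "norm ((1 / t) *\<^sub>R projH phi (N (t *\<^sub>R (w1 + phi))) - (1 / t) *\<^sub>R projH phi (N (t *\<^sub>R (w2 + phi))))
    \<le> n * norm (w1 - w2)"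
proof -
  have "norm (projH phi (N (t *\<^sub>R w1 + t *\<^sub>R phi)) - projH phi (N (t *\<^sub>R w2 + t *\<^sub>R phi)))
      \<le> n * norm (t *\<^sub>R w1 - t *\<^sub>R w2)"
    using lipschitz subspace_scale[OF subspace_HY assms(2)] subspace_scale[OF subspace_HY assms(3)]
    unfolding PN_lipschitz_def by blast
  also have "\<dots> = t * (n * norm (w1 - w2))"
    using assms(1) by (simp add: scaleR_diff_right[symmetric] del: scaleR_diff_right)
  finally have bound: "norm (projH phi (N (t *\<^sub>R (w1 + phi))) - projH phi (N (t *\<^sub>R (w2 + phi))))
      \<le> t * (n * norm (w1 - w2))" by (simp add: scaleR_add_right)
  have "norm ((1 / t) *\<^sub>R projH phi (N (t *\<^sub>R (w1 + phi))) - (1 / t) *\<^sub>R projH phi (N (t *\<^sub>R (w2 + phi))))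
      = (1 / t) * norm (projH phi (N (t *\<^sub>R (w1 + phi))) - projH phi (N (t *\<^sub>R (w2 + phi))))"
    using assms(1) by (simp add: scaleR_diff_right[symmetric] del: scaleR_diff_right)
  also have "\<dots> \<le> (1 / t) * (t * (n * norm (w1 - w2)))" using bound assms(1) by (intro mult_left_mono) auto
  also have "\<dots> = n * norm (w1 - w2)" using assms(1) by simp
  finally show ?thesis .
qed

lemma Ninf_lipschitz:
  assumes "w1 \<in> HX D phi" "w2 \<in> HX D phi"
  shows "norm (Ninf (w1 + phi) - Ninf (w2 + phi)) \<le> n * norm (w1 - w2)"
proof (rule tendsto_upperbound)
  have "w1 + phi \<in> D" "w2 + phi \<in> D" using assms phi_in_D D_add unfolding HX_def by auto
  then show "((\<lambda>t. norm ((1 / t) *\<^sub>R projH phi (N (t *\<^sub>R (w1 + phi))) - (1 / t) *\<^sub>R projH phi (N (t *\<^sub>R (w2 + phi)))))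
      \<longlongrightarrow> norm (Ninf (w1 + phi) - Ninf (w2 + phi))) at_top"
    using Ninf_limit by (intro tendsto_intros) auto
  show "\<forall>\<^sub>F t in at_top. norm ((1 / t) *\<^sub>R projH phi (N (t *\<^sub>R (w1 + phi)))
      - (1 / t) *\<^sub>R projH phi (N (t *\<^sub>R (w2 + phi)))) \<le> n * norm (w1 - w2)"
    using eventually_gt_at_top[of 0] by eventually_elim (use scaled_PN_lipschitz assms in \<open>auto simp: HX_def\<close>)
qed simp

lemma profile_equation_unique_solution: "\<exists>!w. w \<in> HX D phi \<and> L w - projH phi (Ninf (w + phi)) = 0"
proof (rule perturbed_equation_unique_solution[OF projH_in_HY _ subspace_0[OF subspace_HY]])
  fix w1 w2 assume w: "w1 \<in> HX D phi" "w2 \<in> HX D phi"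
  then have "w1 + phi \<in> D" "w2 + phi \<in> D" using phi_in_D D_add unfolding HX_def by auto
  then show "norm (projH phi (Ninf (w1 + phi)) - projH phi (Ninf (w2 + phi))) \<le> n * norm (w1 - w2)"
    using Ninf_lipschitz[OF w] by (simp add: projH_HY Ninf_HY)
qed

text \<open>Dividing the fiber equation by \<open>t\<close>: \<open>v = w(z,t)/t\<close> solves the profile equation up to the
  residual \<open>r(t)\<close> on the right-hand side below, and since \<open>L\<close> is bounded below by some \<open>c > n\<close>
  on \<open>HX\<close> while the nonlinearity is \<open>n\<close>-Lipschitz, \<open>v - w\<^sub>+\<close> is controlled by \<open>r(t)\<close>.\<close>

lemma fiber_w_scaled_deviation_bound:
  assumes wp: "wp \<in> HX D phi" "L wp = Ninf (wp + phi)"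
  shows "\<exists>C. \<forall>z\<in>HY phi. \<forall>t>0. graph_norm L ((1 / t) *\<^sub>R fiber_w D L N phi z t - wp)
      \<le> C * norm ((1 / t) *\<^sub>R z + (1 / t) *\<^sub>R projH phi (N (t *\<^sub>R (wp + phi))) - Ninf (wp + phi))"
proof -
  obtain c where "c > n" and c: "\<forall>u\<in>HX D phi. c * norm u \<le> norm (L u)"
    using L_bounded_below_gap by blast
  define C where "C = (1 + n) / (c - n) + 1"
  have "graph_norm L ((1 / t) *\<^sub>R fiber_w D L N phi z t - wp)
      \<le> C * norm ((1 / t) *\<^sub>R z + (1 / t) *\<^sub>R projH phi (N (t *\<^sub>R (wp + phi))) - Ninf (wp + phi))"
    if z: "z \<in> HY phi" and t: "t > 0" for z t
  proof -
    define f where "f = fiber_w D L N phi z t"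
    define v where "v = (1 / t) *\<^sub>R f"
    define A where "A = (1 / t) *\<^sub>R projH phi (N (t *\<^sub>R (v + phi)))"
    define B where "B = (1 / t) *\<^sub>R projH phi (N (t *\<^sub>R (wp + phi)))"
    define r where "r = (1 / t) *\<^sub>R z + B - Ninf (wp + phi)"
    have f: "f \<in> HX D phi" "L f = z + projH phi (N (f + t *\<^sub>R phi))"
      using fiber_w[OF lipschitz z, of t] unfolding f_def by (auto simp: algebra_simps)
    have v: "v \<in> HX D phi" unfolding v_def using subspace_scale[OF subspace_HX f(1)] .
    have e: "v - wp \<in> HX D phi" using subspace_diff[OF subspace_HX v wp(1)] .
    have "t *\<^sub>R (v + phi) = f + t *\<^sub>R phi" using t unfolding v_def by (simp add: scaleR_add_right)
    then have "(1 / t) *\<^sub>R L f = (1 / t) *\<^sub>R z + A" unfolding f(2) A_def by (simp add: scaleR_add_right)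
    moreover have "L (v - wp) = (1 / t) *\<^sub>R L f - Ninf (wp + phi)"
      using L_diff L_scale v wp f(1) unfolding v_def HX_def by simp
    ultimately have "L (v - wp) = (A - B) + r" unfolding r_def by (simp add: algebra_simps)
    moreover have "norm (A - B) \<le> n * norm (v - wp)"
      unfolding A_def B_def using scaled_PN_lipschitz[OF t] v wp(1) unfolding HX_def by blast
    ultimately have "norm (L (v - wp)) \<le> n * norm (v - wp) + norm r"
      using norm_triangle_ineq[of "A - B" r] by simp
    moreover have "c * norm (v - wp) \<le> norm (L (v - wp))" using c e by blast
    ultimately have "(c - n) * norm (v - wp) \<le> norm r" by (simp add: algebra_simps)
    then have ev: "norm (v - wp) \<le> norm r / (c - n)" using \<open>c > n\<close> by (simp add: field_simps)
    have "graph_norm L (v - wp) \<le> norm (v - wp) + (n * norm (v - wp) + norm r)"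
      using graph_norm_le[of L "v - wp"] \<open>norm (L (v - wp)) \<le> _\<close> by linarith
    also have "\<dots> \<le> norm r / (c - n) + (n * (norm r / (c - n)) + norm r)"
      using ev n_nonneg by (intro add_mono mult_left_mono) auto
    also have "\<dots> = C * norm r" unfolding C_def by (simp add: algebra_simps add_divide_distrib)
    finally show ?thesis unfolding r_def v_def f_def B_def .
  qed
  then show ?thesis by blast
qed

lemma fiber_w_scaled_tendsto:
  assumes wp: "wp \<in> HX D phi" "L wp = Ninf (wp + phi)" and z: "z \<in> HY phi"
  shows "((\<lambda>t. graph_norm L ((1 / t) *\<^sub>R fiber_w D L N phi z t - wp)) \<longlongrightarrow> 0) at_top"
proof -
  obtain C where C: "\<forall>t>0. graph_norm L ((1 / t) *\<^sub>R fiber_w D L N phi z t - wp)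
      \<le> C * norm ((1 / t) *\<^sub>R z + (1 / t) *\<^sub>R projH phi (N (t *\<^sub>R (wp + phi))) - Ninf (wp + phi))"
    using fiber_w_scaled_deviation_bound[OF wp] z by blast
  have "wp + phi \<in> D" using wp(1) phi_in_D D_add unfolding HX_def by auto
  moreover have "((\<lambda>t::real. 1 / t) \<longlongrightarrow> 0) at_top"
    using tendsto_inverse_0_at_top[OF filterlim_ident] by (simp add: divide_inverse)
  ultimately have "((\<lambda>t::real. (1 / t) *\<^sub>R z + (1 / t) *\<^sub>R projH phi (N (t *\<^sub>R (wp + phi))) - Ninf (wp + phi))
      \<longlongrightarrow> 0 *\<^sub>R z + Ninf (wp + phi) - Ninf (wp + phi)) at_top"
    using Ninf_limit by (intro tendsto_intros) auto
  then have "((\<lambda>t. C * norm ((1 / t) *\<^sub>R z + (1 / t) *\<^sub>R projH phi (N (t *\<^sub>R (wp + phi)))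
      - Ninf (wp + phi))) \<longlongrightarrow> C * norm (0::'a)) at_top"
    by (intro tendsto_intros) simp
  then have g: "((\<lambda>t. C * norm ((1 / t) *\<^sub>R z + (1 / t) *\<^sub>R projH phi (N (t *\<^sub>R (wp + phi)))
      - Ninf (wp + phi))) \<longlongrightarrow> 0) at_top" by simp
  show ?thesis
  proof (rule Lim_null_comparison[OF _ g])
    show "\<forall>\<^sub>F t in at_top. norm (graph_norm L ((1 / t) *\<^sub>R fiber_w D L N phi z t - wp))
        \<le> C * norm ((1 / t) *\<^sub>R z + (1 / t) *\<^sub>R projH phi (N (t *\<^sub>R (wp + phi))) - Ninf (wp + phi))"
      using eventually_gt_at_top[of 0] by eventually_elim (use C in \<open>simp add: graph_norm_def\<close>)
  qed
qed

lemma at_top_profile: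
  "\<exists>wp\<in>HX D phi. (\<forall>z\<in>HY phi. ((\<lambda>t. graph_norm L ((1 / t) *\<^sub>R fiber_w D L N phi z t - wp)) \<longlongrightarrow> 0) at_top) \<and>
     L wp - projH phi (Ninf (wp + phi)) = 0 \<and>
     (\<forall>w\<in>HX D phi. L w - projH phi (Ninf (w + phi)) = 0 \<longrightarrow> w = wp)"
proof -
  obtain wp where wp: "wp \<in> HX D phi" "L wp - projH phi (Ninf (wp + phi)) = 0"
    and unique: "\<forall>w\<in>HX D phi. L w - projH phi (Ninf (w + phi)) = 0 \<longrightarrow> w = wp"
    using profile_equation_unique_solution by blast
  have "wp + phi \<in> D" using wp(1) phi_in_D D_add unfolding HX_def by auto
  then have "L wp = Ninf (wp + phi)" using wp(2) by (simp add: projH_HY Ninf_HY)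
  then have "\<forall>z\<in>HY phi. ((\<lambda>t. graph_norm L ((1 / t) *\<^sub>R fiber_w D L N phi z t - wp)) \<longlongrightarrow> 0) at_top"
    using fiber_w_scaled_tendsto[OF wp(1)] by blast
  then show ?thesis using wp unique by blast
qed

lemma reflected: "asymptotically_homogeneous D L lam phi n (\<lambda>x. - N (- x)) (\<lambda>u. - Ninf (- u))"
proof unfold_locales
  show "PN_lipschitz phi n (\<lambda>x. - N (- x))" using PN_lipschitz_reflect[OF lipschitz] .
  show "\<forall>u\<in>D. ((\<lambda>t::real. (1 / t) *\<^sub>R projH phi (- N (- (t *\<^sub>R u)))) \<longlongrightarrow> - Ninf (- u)) at_top"
  proof
    fix u assume "u \<in> D"
    then have "((\<lambda>t::real. (1 / t) *\<^sub>R projH phi (N (t *\<^sub>R - u))) \<longlongrightarrow> Ninf (- u)) at_top"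
      using Ninf_limit D_minus by blast
    then show "((\<lambda>t::real. (1 / t) *\<^sub>R projH phi (- N (- (t *\<^sub>R u)))) \<longlongrightarrow> - Ninf (- u)) at_top"
      by (simp add: projH_minus tendsto_minus_cancel_left)
  qed
qed

lemma at_bot_profile:
  "\<exists>wm\<in>HX D phi. (\<forall>z\<in>HY phi. ((\<lambda>t. graph_norm L ((1 / t) *\<^sub>R fiber_w D L N phi z t - wm)) \<longlongrightarrow> 0) at_bot) \<and>
     L wm + projH phi (Ninf (- wm - phi)) = 0 \<and>
     (\<forall>w\<in>HX D phi. L w + projH phi (Ninf (- w - phi)) = 0 \<longrightarrow> w = wm)"
proof -
  interpret reflected: asymptotically_homogeneous D L lam phi n "\<lambda>x. - N (- x)" "\<lambda>u. - Ninf (- u)"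
    by (rule reflected)
  have eq: "L w - projH phi (- Ninf (- (w + phi))) = L w + projH phi (Ninf (- w - phi))" for w
    by (simp add: projH_minus)
  obtain wm where wm: "wm \<in> HX D phi"
    and lim: "\<forall>z\<in>HY phi. ((\<lambda>t. graph_norm L ((1 / t) *\<^sub>R fiber_w D L (\<lambda>x. - N (- x)) phi z t - wm))
        \<longlongrightarrow> 0) at_top"
    and sol: "L wm + projH phi (Ninf (- wm - phi)) = 0"
    and unique: "\<forall>w\<in>HX D phi. L w + projH phi (Ninf (- w - phi)) = 0 \<longrightarrow> w = wm"
    using reflected.at_top_profile unfolding eq by blast
  have "((\<lambda>t. graph_norm L ((1 / t) *\<^sub>R fiber_w D L N phi z t - wm)) \<longlongrightarrow> 0) at_bot"
    if z: "z \<in> HY phi" for z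
  proof -
    have "(1 / - s) *\<^sub>R fiber_w D L N phi z (- s) = (1 / s) *\<^sub>R fiber_w D L (\<lambda>x. - N (- x)) phi (- z) s" for s
      using fiber_w_reflect[OF lipschitz z] by simp
    then show ?thesis
      using lim subspace_neg[OF subspace_HY z] by (simp add: filterlim_at_bot_mirror)
  qed
  then show ?thesis using wm sol unique by blast
qed

end

theorem mainTheorem8:
  fixes D :: "'a::{real_inner,complete_space} set"
    and L N Ninf :: "'a \<Rightarrow> 'a" and lam :: real and phi :: 'a
  assumes "self_adjoint_op D L"
    and "simple_isolated_eigen D L lam phi"
    and "hyp_H D L N lam phi"
    and "\<forall>u\<in>D. ((\<lambda>t::real. (1 / t) *\<^sub>R projH phi (N (t *\<^sub>R u))) \<longlongrightarrow> Ninf u) at_top"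
  shows "\<exists>wp\<in>HX D phi. \<exists>wm\<in>HX D phi.
     (\<forall>z\<in>HY phi.
        ((\<lambda>t. graph_norm L ((1 / t) *\<^sub>R fiber_w D L N phi z t - wp)) \<longlongrightarrow> 0) at_top \<and>
        ((\<lambda>t. graph_norm L ((1 / t) *\<^sub>R fiber_w D L N phi z t - wm)) \<longlongrightarrow> 0) at_bot) \<and>
     L wp - projH phi (Ninf (wp + phi)) = 0 \<and>
     (\<forall>w\<in>HX D phi. L w - projH phi (Ninf (w + phi)) = 0 \<longrightarrow> w = wp) \<and>
     L wm + projH phi (Ninf (- wm - phi)) = 0 \<and>
     (\<forall>w\<in>HX D phi. L w + projH phi (Ninf (- w - phi)) = 0 \<longrightarrow> w = wm)"
proof -
  obtain n where "n \<ge> 0" "PN_lipschitz phi n N" "{-n..n} \<inter> op_spectrum D L = {lam}"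
    using assms(3) unfolding hyp_H_def PN_lipschitz_def by blast
  then interpret asymptotically_homogeneous D L lam phi n N Ninf
    using assms(1,2,4) by unfold_locales
  obtain wp where "wp \<in> HX D phi"
    "\<forall>z\<in>HY phi. ((\<lambda>t. graph_norm L ((1 / t) *\<^sub>R fiber_w D L N phi z t - wp)) \<longlongrightarrow> 0) at_top"
    "L wp - projH phi (Ninf (wp + phi)) = 0"
    "\<forall>w\<in>HX D phi. L w - projH phi (Ninf (w + phi)) = 0 \<longrightarrow> w = wp"
    using at_top_profile by blast
  moreover obtain wm where "wm \<in> HX D phi"
    "\<forall>z\<in>HY phi. ((\<lambda>t. graph_norm L ((1 / t) *\<^sub>R fiber_w D L N phi z t - wm)) \<longlongrightarrow> 0) at_bot"
    "L wm + projH phi (Ninf (- wm - phi)) = 0"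
    "\<forall>w\<in>HX D phi. L w + projH phi (Ninf (- w - phi)) = 0 \<longrightarrow> w = wm"
    using at_bot_profile by blast
  ultimately show ?thesis by blast
qed

end
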